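(* A (horizontal or vertical) chute move sends a $\mathbf{u}$-compatible subset of $L$ to a $\mathbf{u}$-compatible subset of $L$. In particular it sends a concurrent vertex map $C$ to a concurrent vertex map $C'$ with $C'<_TC$. The analogous statement holds for an inverse (horizontal or vertical) chute move, except that then $C'>_TC$.
   Context: Let $\mathcal{Q}$ be a bipartite quiver with vertex set $V_{\mathcal{Q}}=V_{\rm source}\sqcup V_{\rm target}$ and arrows $h_1,\dots,h_r$, each $h_k$ from $\mathrm{s}(h_k)\in V_{\rm source}$ to $\mathrm{t}(h_k)\in V_{\rm target}$. Let $\mathbf{m}=(m_\gamma)$, $\mathbf{u}=(u_\gamma)$ be tuples of nonnegative integers indexed by $V_{\mathcal{Q}}$. For $k=1,\dots,r$ let $X^{(k)}$ be an $m_{\mathrm{t}(h_k)}\times m_{\mathrm{s}(h_k)}$ matrix of variables $x^{(k)}_{ij}$. For $\alpha\in V_{\rm target}$ with $r_1<\dots<r_s$ the indices of arrows with target $\alpha$, $A_\alpha=[X^{(r_1)}|\cdots|X^{(r_s)}]$; for $\beta\in V_{\rm source}$ with $r'_1<\dots<r'_t$ the indices of arrows with source $\beta$, $A_\beta$ is the stack of $X^{(r'_1)},\dots,X^{(r'_t)}$ top to bottom. $a_\gamma\times b_\gamma$ is the size of $A_\gamma$; $v_\alpha=\sum_{k:\mathrm{t}(h_k)=\alpha}u_{\mathrm{s}(h_k)}$, $v_\beta=\sum_{k:\mathrm{s}(h_k)=\beta}u_{\mathrm{t}(h_k)}$. Standing assumption: $0<u_\gamma\le\min(a_\gamma,b_\gamma)$,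 $u_\alpha\le v_\alpha$, $u_\beta\le v_\beta$. $L=\{(i,j,k):1\le k\le r,1\le i\le m_{\mathrm{t}(h_k)},1\le j\le m_{\mathrm{s}(h_k)}\}$; $\phi_\gamma$ sends a position $(p,q)$ of $A_\gamma$ to $(i,j,k)$ if that entry is $x^{(k)}_{ij}$; $D^\gamma=\phi_\gamma^{-1}(D)$. Coordinates $(i,j)$: $i$ row (downward), $j$ column (rightward). Diagonal chain of size $s$: $\{(i_1,j_1),\dots,(i_s,j_s)\}$ with $i_1<\dots<i_s$, $j_1<\dots<j_s$. $D\subseteq L$ is $\mathbf{u}$-compatible if no $D^\gamma$ contains a diagonal chain of size $u_\gamma+1$; a concurrent vertex map is a maximal (under inclusion) $\mathbf{u}$-compatible subset; all have the same cardinality. Chute moves on $D\subseteq L$: for $\alpha\in V_{\rm target}$, a horizontal chutable rectangle is $[i,i+1]\times[j,j+r-1]$ inside the grid of $A_\alpha$, $r\ge2$, with $D^\alpha\cap([i,i+1]\times[j,j+r-1])=\{(i+1,j),(i,j+r-1),(i+1,j+r-1)\}$; the horizontal chute move replaces $D$ by $D\cup\{\phi_\alpha(i,j)\}\setminus\{\phi_\alpha(i+1,j+r-1)\}$. For $\beta\in V_{\rm source}$, a vertical chutable rectangle is $[i,i+r-1]\times[j,j+1]$ inside the grid of $A_\beta$, $r\ge2$, with $D^\beta\cap$ it $=\{(i+r-1,j),(i,j+1),(i+r-1,j+1)\}$; the vertical chute move replaces $D$ by $D\cup\{\phi_\beta(i,j)\}\setminus\{\phi_\beta(i+r-1,j+1)\}$.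 An inverse chute move is the reverse of a chute move: if $D\to D'$ is a chute move then $D'\dashrightarrow D$ is an inverse chute move. Order: $(i,j,k)<_T(i',j',k')$ iff $k<k'$, or $k=k'$, $i<i'$, or $k=k'$, $i=i'$, $j<j'$. For concurrent vertex maps $C=\{P_1<_T\dots<_TP_N\}$, $C'=\{P'_1<_T\dots<_TP'_N\}$: $C<_TC'$ iff there is $t$ with $P_t<_TP'_t$ and $P_s=P'_s$ for all $s>t$. *)

theory Defs
  imports Main
begin

(* Bipartite quiver data:
   Vs = V_source, Vt = V_target, arrows 1..r, arrow k goes from s k to t k.
   m, u : vertex-indexed tuples.  Positions (i,j,k) of L are 1-based triples. *)

type_synonym pos = "nat \<times> nat \<times> nat"

definition arrK :: "pos \<Rightarrow> nat" where "arrK P = snd (snd P)"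

definition Lset :: "(nat \<Rightarrow> 'v) \<Rightarrow> (nat \<Rightarrow> 'v) \<Rightarrow> nat \<Rightarrow> ('v \<Rightarrow> nat) \<Rightarrow> pos set" where
  "Lset s t r m = {(i,j,k). 1 \<le> k \<and> k \<le> r \<and> 1 \<le> i \<and> i \<le> m (t k) \<and> 1 \<le> j \<and> j \<le> m (s k)}"

definition arrowsT :: "(nat \<Rightarrow> 'v) \<Rightarrow> nat \<Rightarrow> 'v \<Rightarrow> nat set" where
  "arrowsT t r \<alpha> = {k. 1 \<le> k \<and> k \<le> r \<and> t k = \<alpha>}"
definition arrowsS :: "(nat \<Rightarrow> 'v) \<Rightarrow> nat \<Rightarrow> 'v \<Rightarrow> nat set" where
  "arrowsS s r \<beta> = {k. 1 \<le> k \<and> k \<le> r \<and> s k = \<beta>}"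

(* size of A_alpha (alpha target): m_alpha x sum of m_{s(h_k)} *)
definition rowsT :: "(nat \<Rightarrow> 'v) \<Rightarrow> (nat \<Rightarrow> 'v) \<Rightarrow> nat \<Rightarrow> ('v \<Rightarrow> nat) \<Rightarrow> 'v \<Rightarrow> nat" where
  "rowsT s t r m \<alpha> = m \<alpha>"
definition colsT :: "(nat \<Rightarrow> 'v) \<Rightarrow> (nat \<Rightarrow> 'v) \<Rightarrow> nat \<Rightarrow> ('v \<Rightarrow> nat) \<Rightarrow> 'v \<Rightarrow> nat" where
  "colsT s t r m \<alpha> = (\<Sum>k\<in>arrowsT t r \<alpha>. m (s k))"
(* size of A_beta (beta source): sum of m_{t(h_k)} x m_beta *)
definition rowsS :: "(nat \<Rightarrow> 'v) \<Rightarrow> (nat \<Rightarrow> 'v) \<Rightarrow> nat \<Rightarrow> ('v \<Rightarrow> nat) \<Rightarrow> 'v \<Rightarrow> nat" where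
  "rowsS s t r m \<beta> = (\<Sum>k\<in>arrowsS s r \<beta>. m (t k))"
definition colsS :: "(nat \<Rightarrow> 'v) \<Rightarrow> (nat \<Rightarrow> 'v) \<Rightarrow> nat \<Rightarrow> ('v \<Rightarrow> nat) \<Rightarrow> 'v \<Rightarrow> nat" where
  "colsS s t r m \<beta> = m \<beta>"

definition vT :: "(nat \<Rightarrow> 'v) \<Rightarrow> (nat \<Rightarrow> 'v) \<Rightarrow> nat \<Rightarrow> ('v \<Rightarrow> nat) \<Rightarrow> 'v \<Rightarrow> nat" where
  "vT s t r u \<alpha> = (\<Sum>k\<in>arrowsT t r \<alpha>. u (s k))"
definition vS :: "(nat \<Rightarrow> 'v) \<Rightarrow> (nat \<Rightarrow> 'v) \<Rightarrow> nat \<Rightarrow> ('v \<Rightarrow> nat) \<Rightarrow> 'v \<Rightarrow> nat" where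
  "vS s t r u \<beta> = (\<Sum>k\<in>arrowsS s r \<beta>. u (t k))"

(* column offset of block X^(k) inside A_alpha = [X^(r_1)|...|X^(r_s)] *)
definition colOff :: "(nat \<Rightarrow> 'v) \<Rightarrow> (nat \<Rightarrow> 'v) \<Rightarrow> nat \<Rightarrow> ('v \<Rightarrow> nat) \<Rightarrow> 'v \<Rightarrow> nat \<Rightarrow> nat" where
  "colOff s t r m \<alpha> k = (\<Sum>k'\<in>{k' \<in> arrowsT t r \<alpha>. k' < k}. m (s k'))"
(* row offset of block X^(k) inside A_beta (stack top to bottom) *)
definition rowOff :: "(nat \<Rightarrow> 'v) \<Rightarrow> (nat \<Rightarrow> 'v) \<Rightarrow> nat \<Rightarrow> ('v \<Rightarrow> nat) \<Rightarrow> 'v \<Rightarrow> nat \<Rightarrow> nat" where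
  "rowOff s t r m \<beta> k = (\<Sum>k'\<in>{k' \<in> arrowsS s r \<beta>. k' < k}. m (t k'))"

definition gridT :: "(nat \<Rightarrow> 'v) \<Rightarrow> (nat \<Rightarrow> 'v) \<Rightarrow> nat \<Rightarrow> ('v \<Rightarrow> nat) \<Rightarrow> 'v \<Rightarrow> (nat \<times> nat) set" where
  "gridT s t r m \<alpha> = {(p,q). 1 \<le> p \<and> p \<le> rowsT s t r m \<alpha> \<and> 1 \<le> q \<and> q \<le> colsT s t r m \<alpha>}"
definition gridS :: "(nat \<Rightarrow> 'v) \<Rightarrow> (nat \<Rightarrow> 'v) \<Rightarrow> nat \<Rightarrow> ('v \<Rightarrow> nat) \<Rightarrow> 'v \<Rightarrow> (nat \<times> nat) set" where
  "gridS s t r m \<beta> = {(p,q). 1 \<le> p \<and> p \<le> rowsS s t r m \<beta> \<and> 1 \<le> q \<and> q \<le> colsS s t r m \<beta>}"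

(* phi_gamma: entry (p,q) of A_gamma is the variable x^(k)_ij, sent to (i,j,k) *)
definition phiT :: "(nat \<Rightarrow> 'v) \<Rightarrow> (nat \<Rightarrow> 'v) \<Rightarrow> nat \<Rightarrow> ('v \<Rightarrow> nat) \<Rightarrow> 'v \<Rightarrow> nat \<times> nat \<Rightarrow> pos" where
  "phiT s t r m \<alpha> pq = (THE P. \<exists>i j k. P = (i,j,k) \<and> P \<in> Lset s t r m \<and> t k = \<alpha> \<and>
                                   pq = (i, colOff s t r m \<alpha> k + j))"
definition phiS :: "(nat \<Rightarrow> 'v) \<Rightarrow> (nat \<Rightarrow> 'v) \<Rightarrow> nat \<Rightarrow> ('v \<Rightarrow> nat) \<Rightarrow> 'v \<Rightarrow> nat \<times> nat \<Rightarrow> pos" where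
  "phiS s t r m \<beta> pq = (THE P. \<exists>i j k. P = (i,j,k) \<and> P \<in> Lset s t r m \<and> s k = \<beta> \<and>
                                   pq = (rowOff s t r m \<beta> k + i, j))"

definition DT :: "(nat \<Rightarrow> 'v) \<Rightarrow> (nat \<Rightarrow> 'v) \<Rightarrow> nat \<Rightarrow> ('v \<Rightarrow> nat) \<Rightarrow> 'v \<Rightarrow> pos set \<Rightarrow> (nat \<times> nat) set" where
  "DT s t r m \<alpha> D = {pq \<in> gridT s t r m \<alpha>. phiT s t r m \<alpha> pq \<in> D}"
definition DS :: "(nat \<Rightarrow> 'v) \<Rightarrow> (nat \<Rightarrow> 'v) \<Rightarrow> nat \<Rightarrow> ('v \<Rightarrow> nat) \<Rightarrow> 'v \<Rightarrow> pos set \<Rightarrow> (nat \<times> nat) set" where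
  "DS s t r m \<beta> D = {pq \<in> gridS s t r m \<beta>. phiS s t r m \<beta> pq \<in> D}"

definition has_diag_chain :: "(nat \<times> nat) set \<Rightarrow> nat \<Rightarrow> bool" where
  "has_diag_chain S n \<longleftrightarrow> (\<exists>f :: nat \<Rightarrow> nat \<times> nat. (\<forall>a\<in>{1..n}. f a \<in> S) \<and>
      (\<forall>a b. 1 \<le> a \<and> a < b \<and> b \<le> n \<longrightarrow> fst (f a) < fst (f b) \<and> snd (f a) < snd (f b)))"

definition u_compatible :: "'v set \<Rightarrow> 'v set \<Rightarrow> (nat \<Rightarrow> 'v) \<Rightarrow> (nat \<Rightarrow> 'v) \<Rightarrow> nat \<Rightarrow> ('v \<Rightarrow> nat) \<Rightarrow> ('v \<Rightarrow> nat) \<Rightarrow> pos set \<Rightarrow> bool" where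
  "u_compatible Vs Vt s t r m u D \<longleftrightarrow> D \<subseteq> Lset s t r m \<and>
     (\<forall>\<alpha>\<in>Vt. \<not> has_diag_chain (DT s t r m \<alpha> D) (u \<alpha> + 1)) \<and>
     (\<forall>\<beta>\<in>Vs. \<not> has_diag_chain (DS s t r m \<beta> D) (u \<beta> + 1))"

definition concurrent_vertex_map :: "'v set \<Rightarrow> 'v set \<Rightarrow> (nat \<Rightarrow> 'v) \<Rightarrow> (nat \<Rightarrow> 'v) \<Rightarrow> nat \<Rightarrow> ('v \<Rightarrow> nat) \<Rightarrow> ('v \<Rightarrow> nat) \<Rightarrow> pos set \<Rightarrow> bool" where
  "concurrent_vertex_map Vs Vt s t r m u C \<longleftrightarrow> u_compatible Vs Vt s t r m u C \<and>
     (\<forall>D. u_compatible Vs Vt s t r m u D \<and> C \<subseteq> D \<longrightarrow> D = C)"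

definition hchute :: "'v set \<Rightarrow> (nat \<Rightarrow> 'v) \<Rightarrow> (nat \<Rightarrow> 'v) \<Rightarrow> nat \<Rightarrow> ('v \<Rightarrow> nat) \<Rightarrow> pos set \<Rightarrow> pos set \<Rightarrow> bool" where
  "hchute Vt s t r m D D' \<longleftrightarrow> (\<exists>\<alpha>\<in>Vt. \<exists>i j l. 2 \<le> l \<and>
      1 \<le> i \<and> i + 1 \<le> rowsT s t r m \<alpha> \<and> 1 \<le> j \<and> j + l - 1 \<le> colsT s t r m \<alpha> \<and>
      DT s t r m \<alpha> D \<inter> ({i..i+1} \<times> {j..j+l-1}) = {(i+1, j), (i, j+l-1), (i+1, j+l-1)} \<and>
      D' = (D \<union> {phiT s t r m \<alpha> (i, j)}) - {phiT s t r m \<alpha> (i+1, j+l-1)})"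

definition vchute :: "'v set \<Rightarrow> (nat \<Rightarrow> 'v) \<Rightarrow> (nat \<Rightarrow> 'v) \<Rightarrow> nat \<Rightarrow> ('v \<Rightarrow> nat) \<Rightarrow> pos set \<Rightarrow> pos set \<Rightarrow> bool" where
  "vchute Vs s t r m D D' \<longleftrightarrow> (\<exists>\<beta>\<in>Vs. \<exists>i j l. 2 \<le> l \<and>
      1 \<le> i \<and> i + l - 1 \<le> rowsS s t r m \<beta> \<and> 1 \<le> j \<and> j + 1 \<le> colsS s t r m \<beta> \<and>
      DS s t r m \<beta> D \<inter> ({i..i+l-1} \<times> {j..j+1}) = {(i+l-1, j), (i, j+1), (i+l-1, j+1)} \<and>
      D' = (D \<union> {phiS s t r m \<beta> (i, j)}) - {phiS s t r m \<beta> (i+l-1, j+1)})"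

definition chute_move :: "'v set \<Rightarrow> 'v set \<Rightarrow> (nat \<Rightarrow> 'v) \<Rightarrow> (nat \<Rightarrow> 'v) \<Rightarrow> nat \<Rightarrow> ('v \<Rightarrow> nat) \<Rightarrow> pos set \<Rightarrow> pos set \<Rightarrow> bool" where
  "chute_move Vs Vt s t r m D D' \<longleftrightarrow> hchute Vt s t r m D D' \<or> vchute Vs s t r m D D'"

definition inv_chute_move :: "'v set \<Rightarrow> 'v set \<Rightarrow> (nat \<Rightarrow> 'v) \<Rightarrow> (nat \<Rightarrow> 'v) \<Rightarrow> nat \<Rightarrow> ('v \<Rightarrow> nat) \<Rightarrow> pos set \<Rightarrow> pos set \<Rightarrow> bool" where
  "inv_chute_move Vs Vt s t r m D D' \<longleftrightarrow> chute_move Vs Vt s t r m D' D"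

definition ltT :: "pos \<Rightarrow> pos \<Rightarrow> bool" where
  "ltT P P' \<longleftrightarrow> (case P of (i,j,k) \<Rightarrow> case P' of (i',j',k') \<Rightarrow>
      k < k' \<or> (k = k' \<and> i < i') \<or> (k = k' \<and> i = i' \<and> j < j'))"

(* increasing enumeration P_1 <_T ... <_T P_N of a finite set (0-based list) *)
definition enumT :: "pos set \<Rightarrow> pos list" where
  "enumT C = (THE xs. set xs = C \<and> sorted_wrt ltT xs)"

definition setLtT :: "pos set \<Rightarrow> pos set \<Rightarrow> bool" where
  "setLtT C C' \<longleftrightarrow> (let xs = enumT C; ys = enumT C' in length xs = length ys \<and>
      (\<exists>t < length xs. ltT (xs ! t) (ys ! t) \<and> (\<forall>s'. t < s' \<and> s' < length xs \<longrightarrow> xs ! s' = ys ! s')))"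

definition standing :: "'v set \<Rightarrow> 'v set \<Rightarrow> (nat \<Rightarrow> 'v) \<Rightarrow> (nat \<Rightarrow> 'v) \<Rightarrow> nat \<Rightarrow> ('v \<Rightarrow> nat) \<Rightarrow> ('v \<Rightarrow> nat) \<Rightarrow> bool" where
  "standing Vs Vt s t r m u \<longleftrightarrow> finite Vs \<and> finite Vt \<and> Vs \<inter> Vt = {} \<and>
     (\<forall>k\<in>{1..r}. s k \<in> Vs \<and> t k \<in> Vt) \<and>
     (\<forall>\<alpha>\<in>Vt. 0 < u \<alpha> \<and> u \<alpha> \<le> min (rowsT s t r m \<alpha>) (colsT s t r m \<alpha>) \<and> u \<alpha> \<le> vT s t r u \<alpha>) \<and>
     (\<forall>\<beta>\<in>Vs. 0 < u \<beta> \<and> u \<beta> \<le> min (rowsS s t r m \<beta>) (colsS s t r m \<beta>) \<and> u \<beta> \<le> vS s t r u \<beta>)"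

end

theory Submission
  imports Defs "HOL-Library.Product_Lexorder"
begin

text \<open>
  Reversing all arrows of the quiver swaps sources and targets and transposes every block
  X^(k); it turns vertical chute moves into horizontal ones and preserves
  compatibility and maximality, so only horizontal moves need an argument.

  A horizontal move at \<open>\<alpha>\<close> works in a rectangle spanned by two adjacent rows of
  \<open>A\<^sub>\<alpha>\<close>: it adds the top-left corner \<open>P\<close> and deletes the bottom-right
  corner \<open>Q\<close>, while the bottom-left corner \<open>B\<close> and the top-right corner \<open>T\<close>
  are present and the bottom row is empty strictly between them. A diagonal chain of the new set
  through \<open>P\<close> can be rerouted through \<open>B\<close>, or through \<open>T\<close> if its successor lies in
  the bottom row (which forces it to the right of \<open>Q\<close>). The same rerouting works in the
  matrix \<open>A\<^sub>\<beta>\<close> of the source of the arrow of \<open>P\<close>, where the two rows of the block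
  X^(k) containing \<open>P\<close> reappear as adjacent rows; inverse moves are symmetric. Maximality transfers
  because a one-point extension of the new set is carried back, by one or two such exchanges in
  the same two rows, to a one-point extension of the old set.

  Finally a move exchanges \<open>Q\<close> for the \<open><\<^sub>T\<close>-smaller entry \<open>P\<close>, which changes the
  sorted enumeration in exactly one position.
\<close>

definition offset :: "nat set \<Rightarrow> (nat \<Rightarrow> nat) \<Rightarrow> nat \<Rightarrow> nat" where
  "offset K w k = (\<Sum>k'\<in>{k'\<in>K. k' < k}. w k')"

lemma offset_add_le_offset:
  assumes "finite K" "k \<in> K" "k < k'"
  shows "offset K w k + w k \<le> offset K w k'"
proof -
  have "sum w (insert k {k''\<in>K. k'' < k}) \<le> sum w {k''\<in>K. k'' < k'}"
    by (rule sum_mono2) (use assms in auto)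
  then show ?thesis
    using assms(1) by (simp add: offset_def)
qed

lemma offset_add_le_sum:
  assumes "finite K" "k \<in> K"
  shows "offset K w k + w k \<le> sum w K"
proof -
  have "sum w (insert k {k'\<in>K. k' < k}) \<le> sum w K"
    by (rule sum_mono2) (use assms in auto)
  then show ?thesis
    using assms(1) by (simp add: offset_def)
qed

lemma offset_add_less_iff:
  assumes "finite K" "k \<in> K" "k' \<in> K" "1 \<le> j" "j \<le> w k" "1 \<le> j'" "j' \<le> w k'"
  shows "offset K w k + j < offset K w k' + j' \<longleftrightarrow> k < k' \<or> (k = k' \<and> j < j')"
proof (cases k k' rule: linorder_cases)
  case less
  with offset_add_le_offset[OF assms(1,2) this, of w] assms show ?thesis by simp
next
  case greater
  with offset_add_le_offset[OF assms(1,3) this, of w] assms show ?thesis by simp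
qed simp

lemma offset_add_eq_iff:
  assumes "finite K" "k \<in> K" "k' \<in> K" "1 \<le> j" "j \<le> w k" "1 \<le> j'" "j' \<le> w k'"
  shows "offset K w k + j = offset K w k' + j' \<longleftrightarrow> k = k' \<and> j = j'"
  using offset_add_less_iff[OF assms] offset_add_less_iff[OF assms(1,3,2,6,7,4,5)]
  by (metis nat_neq_iff)

lemma offset_cover:
  assumes "finite K" "1 \<le> q" "q \<le> sum w K"
  shows "\<exists>k\<in>K. offset K w k < q \<and> q \<le> offset K w k + w k"
  using assms
proof (induction K rule: finite_linorder_max_induct)
  case (insert b A)
  have "{k'\<in>insert b A. k' < k} = {k'\<in>A. k' < k}" if "k \<in> A" for k
    using insert.hyps(2) that by auto
  then have offset_insert: "offset (insert b A) w k = offset A w k" if "k \<in> A" for k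
    unfolding offset_def using that by simp
  have "{k'\<in>insert b A. k' < b} = A"
    using insert.hyps(2) by auto
  then have offset_b: "offset (insert b A) w b = sum w A"
    unfolding offset_def by simp
  have "b \<notin> A"
    using insert.hyps(2) by auto
  show ?case
  proof (cases "q \<le> sum w A")
    case True
    then show ?thesis using insert offset_insert by fastforce
  next
    case False
    then show ?thesis using insert.prems \<open>b \<notin> A\<close> insert.hyps(1) offset_b by auto
  qed
qed simp

section \<open>Rerouting diagonal chains\<close>

definition diag_less :: "nat \<times> nat \<Rightarrow> nat \<times> nat \<Rightarrow> bool" (infix "\<prec>" 50) where
  "x \<prec> y \<longleftrightarrow> fst x < fst y \<and> snd x < snd y"

lemma has_diag_chain_iff:
  "has_diag_chain S n \<longleftrightarrow>
     (\<exists>f. (\<forall>a\<in>{1..n}. f a \<in> S) \<and> (\<forall>a b. 1 \<le> a \<longrightarrow> a < b \<longrightarrow> b \<le> n \<longrightarrow> f a \<prec> f b))"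
  unfolding has_diag_chain_def diag_less_def by blast

lemma has_diag_chain_mono: "has_diag_chain S n \<Longrightarrow> S \<subseteq> S' \<Longrightarrow> has_diag_chain S' n"
  unfolding has_diag_chain_def by blast

lemma has_diag_chain_swap_image:
  assumes "has_diag_chain S n"
  shows "has_diag_chain (prod.swap ` S) n"
proof -
  obtain f where "\<forall>a\<in>{1..n}. f a \<in> S"
    "\<forall>a b. 1 \<le> a \<and> a < b \<and> b \<le> n \<longrightarrow> fst (f a) < fst (f b) \<and> snd (f a) < snd (f b)"
    using assms unfolding has_diag_chain_def by blast
  then show ?thesis
    unfolding has_diag_chain_def by (intro exI[of _ "prod.swap \<circ> f"]) auto
qed

lemma has_diag_chain_swap_iff: "has_diag_chain (prod.swap ` S) n \<longleftrightarrow> has_diag_chain S n"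
  using has_diag_chain_swap_image[of "prod.swap ` S" n] has_diag_chain_swap_image[of S n]
  by (auto simp: image_image)

lemma has_diag_chain_reroute:
  assumes chain: "has_diag_chain S n" and sub: "S - {p} \<subseteq> S'"
    and reroute: "\<And>K. K \<subseteq> S - {p} \<Longrightarrow> \<forall>x\<in>K. \<forall>y\<in>K. x = y \<or> x \<prec> y \<or> y \<prec> x \<Longrightarrow>
                    \<exists>c\<in>S'. \<forall>x\<in>K. (x \<prec> p \<longrightarrow> x \<prec> c) \<and> (p \<prec> x \<longrightarrow> c \<prec> x)"
  shows "has_diag_chain S' n"
proof -
  obtain f where f_in: "\<forall>a\<in>{1..n}. f a \<in> S"
    and f_mono: "\<And>a b. 1 \<le> a \<Longrightarrow> a < b \<Longrightarrow> b \<le> n \<Longrightarrow> f a \<prec> f b"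
    using chain unfolding has_diag_chain_iff by blast
  have diag_irrefl: "\<not> x \<prec> x" for x
    unfolding diag_less_def by simp
  have f_cmp: "f a \<prec> f b \<or> f b \<prec> f a" if "a \<in> {1..n}" "b \<in> {1..n}" "a \<noteq> b" for a b
    using that f_mono by (cases "a < b") auto
  show ?thesis
  proof (cases "p \<in> f ` {1..n}")
    case False
    then show ?thesis
      using f_in f_mono sub unfolding has_diag_chain_iff by blast
  next
    case True
    then obtain a0 where a0: "a0 \<in> {1..n}" "f a0 = p"
      by blast
    define K where "K = f ` ({1..n} - {a0})"
    have K_sub: "K \<subseteq> S - {p}"
      unfolding K_def using f_in f_cmp a0 diag_irrefl by fastforce
    have "\<forall>x\<in>K. \<forall>y\<in>K. x = y \<or> x \<prec> y \<or> y \<prec> x"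
    proof (intro ballI)
      fix x y assume "x \<in> K" "y \<in> K"
      then obtain a b where "a \<in> {1..n}" "b \<in> {1..n}" "x = f a" "y = f b"
        unfolding K_def by blast
      then show "x = y \<or> x \<prec> y \<or> y \<prec> x"
        using f_cmp by (cases "a = b") auto
    qed
    then obtain c where c: "c \<in> S'" "\<forall>x\<in>K. (x \<prec> p \<longrightarrow> x \<prec> c) \<and> (p \<prec> x \<longrightarrow> c \<prec> x)"
      using reroute K_sub by blast
    define g where "g = f(a0 := c)"
    have "\<forall>a\<in>{1..n}. g a \<in> S'"
      unfolding g_def using c(1) K_sub sub unfolding K_def by auto
    moreover have "g a \<prec> g b" if "1 \<le> a" "a < b" "b \<le> n" for a b
    proof -
      have "f a \<prec> f b"
        using f_mono that .
      then show ?thesis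
        unfolding g_def using c(2) a0 that unfolding K_def by auto
    qed
    ultimately show ?thesis
      unfolding has_diag_chain_iff by blast
  qed
qed

lemma has_diag_chain_reroute_top_left:
  assumes chain: "has_diag_chain S n" and sub: "S - {(r, a)} \<subseteq> S'" and below: "(r + 1, a) \<in> S'"
    and right: "\<And>y. y \<in> S \<Longrightarrow> fst y = r + 1 \<Longrightarrow> a < snd y \<Longrightarrow>
                  \<exists>b. (r, b) \<in> S' \<and> a < b \<and> b < snd y"
  shows "has_diag_chain S' n"
proof (rule has_diag_chain_reroute[OF chain sub])
  fix K assume K: "K \<subseteq> S - {(r, a)}" and lin: "\<forall>x\<in>K. \<forall>y\<in>K. x = y \<or> x \<prec> y \<or> y \<prec> x"
  show "\<exists>c\<in>S'. \<forall>x\<in>K. (x \<prec> (r, a) \<longrightarrow> x \<prec> c) \<and> ((r, a) \<prec> x \<longrightarrow> c \<prec> x)"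
  proof (cases "\<exists>y\<in>K. fst y = r + 1 \<and> a < snd y")
    case True
    then obtain y b where y: "y \<in> K" "fst y = r + 1" and b: "(r, b) \<in> S'" "a < b" "b < snd y"
      using right K by blast
    have "(x \<prec> (r, a) \<longrightarrow> x \<prec> (r, b)) \<and> ((r, a) \<prec> x \<longrightarrow> (r, b) \<prec> x)" if "x \<in> K" for x
      using lin that y b unfolding diag_less_def by fastforce
    then show ?thesis
      using b(1) by blast
  next
    case False
    then have "(x \<prec> (r, a) \<longrightarrow> x \<prec> (r + 1, a)) \<and> ((r, a) \<prec> x \<longrightarrow> (r + 1, a) \<prec> x)" if "x \<in> K" for x
      using that unfolding diag_less_def by auto
    then show ?thesis
      using below by blast
  qed
qed

lemma has_diag_chain_reroute_bottom_right:
  assumes chain: "has_diag_chain S n" and sub: "S - {(r + 1, b)} \<subseteq> S'" and above: "(r, b) \<in> S'"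
    and left: "\<And>y. y \<in> S \<Longrightarrow> fst y = r \<Longrightarrow> snd y < b \<Longrightarrow>
                 \<exists>a. (r + 1, a) \<in> S' \<and> snd y < a \<and> a < b"
  shows "has_diag_chain S' n"
proof (rule has_diag_chain_reroute[OF chain sub])
  fix K assume K: "K \<subseteq> S - {(r + 1, b)}" and lin: "\<forall>x\<in>K. \<forall>y\<in>K. x = y \<or> x \<prec> y \<or> y \<prec> x"
  show "\<exists>c\<in>S'. \<forall>x\<in>K. (x \<prec> (r + 1, b) \<longrightarrow> x \<prec> c) \<and> ((r + 1, b) \<prec> x \<longrightarrow> c \<prec> x)"
  proof (cases "\<exists>y\<in>K. fst y = r \<and> snd y < b")
    case True
    then obtain y a where y: "y \<in> K" "fst y = r" and a: "(r + 1, a) \<in> S'" "snd y < a" "a < b"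
      using left K by blast
    have "(x \<prec> (r + 1, b) \<longrightarrow> x \<prec> (r + 1, a)) \<and> ((r + 1, b) \<prec> x \<longrightarrow> (r + 1, a) \<prec> x)" if "x \<in> K" for x
      using lin that y a unfolding diag_less_def by fastforce
    then show ?thesis
      using a(1) by blast
  next
    case False
    then have "(x \<prec> (r + 1, b) \<longrightarrow> x \<prec> (r, b)) \<and> ((r + 1, b) \<prec> x \<longrightarrow> (r, b) \<prec> x)" if "x \<in> K" for x
      using that unfolding diag_less_def by auto
    then show ?thesis
      using above by blast
  qed
qed

section \<open>The matrices \<open>A\<^sub>\<gamma>\<close>\<close>

context
  fixes s t :: "nat \<Rightarrow> 'v" and r :: nat and m :: "'v \<Rightarrow> nat"
begin

definition LT :: "'v \<Rightarrow> pos set" where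
  "LT \<alpha> = {X \<in> Lset s t r m. t (arrK X) = \<alpha>}"

definition LS :: "'v \<Rightarrow> pos set" where
  "LS \<beta> = {X \<in> Lset s t r m. s (arrK X) = \<beta>}"

definition posT :: "'v \<Rightarrow> pos \<Rightarrow> nat \<times> nat" where
  "posT \<alpha> = (\<lambda>(i, j, k). (i, colOff s t r m \<alpha> k + j))"

definition posS :: "'v \<Rightarrow> pos \<Rightarrow> nat \<times> nat" where
  "posS \<beta> = (\<lambda>(i, j, k). (rowOff s t r m \<beta> k + i, j))"

lemma posT_simp: "posT \<alpha> (i, j, k) = (i, colOff s t r m \<alpha> k + j)"
  unfolding posT_def by simp

lemma posS_simp: "posS \<beta> (i, j, k) = (rowOff s t r m \<beta> k + i, j)"
  unfolding posS_def by simp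

lemma mem_LT_iff:
  "(i, j, k) \<in> LT \<alpha> \<longleftrightarrow> k \<in> arrowsT t r \<alpha> \<and> 1 \<le> i \<and> i \<le> m \<alpha> \<and> 1 \<le> j \<and> j \<le> m (s k)"
  unfolding LT_def Lset_def arrowsT_def arrK_def by auto

lemma mem_LS_iff:
  "(i, j, k) \<in> LS \<beta> \<longleftrightarrow> k \<in> arrowsS s r \<beta> \<and> 1 \<le> i \<and> i \<le> m (t k) \<and> 1 \<le> j \<and> j \<le> m \<beta>"
  unfolding LS_def Lset_def arrowsS_def arrK_def by auto

lemma LT_subset_Lset: "LT \<alpha> \<subseteq> Lset s t r m"
  unfolding LT_def by blast

lemma finite_arrowsT: "finite (arrowsT t r \<alpha>)"
  unfolding arrowsT_def by (rule finite_subset[of _ "{1..r}"]) auto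

lemma finite_arrowsS: "finite (arrowsS s r \<beta>)"
  unfolding arrowsS_def by (rule finite_subset[of _ "{1..r}"]) auto

lemma colOff_eq_offset: "colOff s t r m \<alpha> = offset (arrowsT t r \<alpha>) (\<lambda>k. m (s k))"
  unfolding colOff_def offset_def by (rule ext) simp

lemma rowOff_eq_offset: "rowOff s t r m \<beta> = offset (arrowsS s r \<beta>) (\<lambda>k. m (t k))"
  unfolding rowOff_def offset_def by (rule ext) simp

lemma colOff_add_less_iff:
  assumes "k \<in> arrowsT t r \<alpha>" "k' \<in> arrowsT t r \<alpha>" "1 \<le> j" "j \<le> m (s k)" "1 \<le> j'" "j' \<le> m (s k')"
  shows "colOff s t r m \<alpha> k + j < colOff s t r m \<alpha> k' + j' \<longleftrightarrow> k < k' \<or> (k = k' \<and> j < j')"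
  unfolding colOff_eq_offset using offset_add_less_iff[OF finite_arrowsT assms] .

lemma rowOff_add_eq_iff:
  assumes "k \<in> arrowsS s r \<beta>" "k' \<in> arrowsS s r \<beta>" "1 \<le> i" "i \<le> m (t k)" "1 \<le> i'" "i' \<le> m (t k')"
  shows "rowOff s t r m \<beta> k + i = rowOff s t r m \<beta> k' + i' \<longleftrightarrow> k = k' \<and> i = i'"
  unfolding rowOff_eq_offset using offset_add_eq_iff[OF finite_arrowsS assms] .

lemma bij_betw_posT: "bij_betw (posT \<alpha>) (LT \<alpha>) (gridT s t r m \<alpha>)"
proof (rule bij_betw_imageI)
  show "inj_on (posT \<alpha>) (LT \<alpha>)"
    by (auto simp: inj_on_def mem_LT_iff posT_simp colOff_eq_offset offset_add_eq_iff[OF finite_arrowsT])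
  show "posT \<alpha> ` LT \<alpha> = gridT s t r m \<alpha>"
  proof
    show "posT \<alpha> ` LT \<alpha> \<subseteq> gridT s t r m \<alpha>"
      using offset_add_le_sum[OF finite_arrowsT, where w = "\<lambda>k. m (s k)"]
      by (fastforce simp: mem_LT_iff posT_simp gridT_def rowsT_def colsT_def colOff_eq_offset)
    show "gridT s t r m \<alpha> \<subseteq> posT \<alpha> ` LT \<alpha>"
    proof
      fix g assume "g \<in> gridT s t r m \<alpha>"
      then obtain p q where g: "g = (p, q)" "1 \<le> p" "p \<le> m \<alpha>" "1 \<le> q"
        "q \<le> sum (\<lambda>k. m (s k)) (arrowsT t r \<alpha>)"
        unfolding gridT_def rowsT_def colsT_def by auto
      then obtain k where "k \<in> arrowsT t r \<alpha>" "colOff s t r m \<alpha> k < q" "q \<le> colOff s t r m \<alpha> k + m (s k)"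
        unfolding colOff_eq_offset using offset_cover[OF finite_arrowsT] by blast
      with g have "(p, q - colOff s t r m \<alpha> k, k) \<in> LT \<alpha>" "posT \<alpha> (p, q - colOff s t r m \<alpha> k, k) = g"
        by (auto simp: mem_LT_iff posT_simp)
      then show "g \<in> posT \<alpha> ` LT \<alpha>"
        by force
    qed
  qed
qed

lemma bij_betw_posS: "bij_betw (posS \<beta>) (LS \<beta>) (gridS s t r m \<beta>)"
proof (rule bij_betw_imageI)
  show "inj_on (posS \<beta>) (LS \<beta>)"
    by (auto simp: inj_on_def mem_LS_iff posS_simp rowOff_eq_offset offset_add_eq_iff[OF finite_arrowsS])
  show "posS \<beta> ` LS \<beta> = gridS s t r m \<beta>"
  proof
    show "posS \<beta> ` LS \<beta> \<subseteq> gridS s t r m \<beta>"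
      using offset_add_le_sum[OF finite_arrowsS, where w = "\<lambda>k. m (t k)"]
      by (fastforce simp: mem_LS_iff posS_simp gridS_def rowsS_def colsS_def rowOff_eq_offset)
    show "gridS s t r m \<beta> \<subseteq> posS \<beta> ` LS \<beta>"
    proof
      fix g assume "g \<in> gridS s t r m \<beta>"
      then obtain p q where g: "g = (p, q)" "1 \<le> q" "q \<le> m \<beta>" "1 \<le> p"
        "p \<le> sum (\<lambda>k. m (t k)) (arrowsS s r \<beta>)"
        unfolding gridS_def rowsS_def colsS_def by auto
      then obtain k where "k \<in> arrowsS s r \<beta>" "rowOff s t r m \<beta> k < p" "p \<le> rowOff s t r m \<beta> k + m (t k)"
        unfolding rowOff_eq_offset using offset_cover[OF finite_arrowsS] by blast
      with g have "(p - rowOff s t r m \<beta> k, q, k) \<in> LS \<beta>" "posS \<beta> (p - rowOff s t r m \<beta> k, q, k) = g"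
        by (auto simp: mem_LS_iff posS_simp)
      then show "g \<in> posS \<beta> ` LS \<beta>"
        by force
    qed
  qed
qed

lemma phiT_eq_the_inv_into: "phiT s t r m \<alpha> = the_inv_into (LT \<alpha>) (posT \<alpha>)"
proof (rule ext)
  fix pq
  have "(\<exists>i j k. P = (i, j, k) \<and> P \<in> Lset s t r m \<and> t k = \<alpha> \<and> pq = (i, colOff s t r m \<alpha> k + j))
          \<longleftrightarrow> P \<in> LT \<alpha> \<and> posT \<alpha> P = pq" for P
    by (cases P) (auto simp: LT_def arrK_def posT_simp)
  then show "phiT s t r m \<alpha> pq = the_inv_into (LT \<alpha>) (posT \<alpha>) pq"
    unfolding phiT_def the_inv_into_def by simp
qed

lemma phiS_eq_the_inv_into: "phiS s t r m \<beta> = the_inv_into (LS \<beta>) (posS \<beta>)"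
proof (rule ext)
  fix pq
  have "(\<exists>i j k. P = (i, j, k) \<and> P \<in> Lset s t r m \<and> s k = \<beta> \<and> pq = (rowOff s t r m \<beta> k + i, j))
          \<longleftrightarrow> P \<in> LS \<beta> \<and> posS \<beta> P = pq" for P
    by (cases P) (auto simp: LS_def arrK_def posS_simp)
  then show "phiS s t r m \<beta> pq = the_inv_into (LS \<beta>) (posS \<beta>) pq"
    unfolding phiS_def the_inv_into_def by simp
qed

lemma phiT_posT: "X \<in> LT \<alpha> \<Longrightarrow> phiT s t r m \<alpha> (posT \<alpha> X) = X"
  using bij_betw_posT unfolding phiT_eq_the_inv_into bij_betw_def by (simp add: the_inv_into_f_f)

lemma phiS_posS: "X \<in> LS \<beta> \<Longrightarrow> phiS s t r m \<beta> (posS \<beta> X) = X"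
  using bij_betw_posS unfolding phiS_eq_the_inv_into bij_betw_def by (simp add: the_inv_into_f_f)

lemma phiT_in_LT: "g \<in> gridT s t r m \<alpha> \<Longrightarrow> phiT s t r m \<alpha> g \<in> LT \<alpha>"
  using bij_betw_posT unfolding phiT_eq_the_inv_into bij_betw_def by (blast intro: the_inv_into_into)

lemma phiS_in_LS: "g \<in> gridS s t r m \<beta> \<Longrightarrow> phiS s t r m \<beta> g \<in> LS \<beta>"
  using bij_betw_posS unfolding phiS_eq_the_inv_into bij_betw_def by (blast intro: the_inv_into_into)

lemma posT_phiT: "g \<in> gridT s t r m \<alpha> \<Longrightarrow> posT \<alpha> (phiT s t r m \<alpha> g) = g"
  using bij_betw_posT unfolding phiT_eq_the_inv_into bij_betw_def by (simp add: f_the_inv_into_f)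

lemma posS_phiS: "g \<in> gridS s t r m \<beta> \<Longrightarrow> posS \<beta> (phiS s t r m \<beta> g) = g"
  using bij_betw_posS unfolding phiS_eq_the_inv_into bij_betw_def by (simp add: f_the_inv_into_f)

lemma phiT_eq_iff:
  "g \<in> gridT s t r m \<alpha> \<Longrightarrow> g' \<in> gridT s t r m \<alpha> \<Longrightarrow> phiT s t r m \<alpha> g = phiT s t r m \<alpha> g' \<longleftrightarrow> g = g'"
  by (metis posT_phiT)

lemma DT_eq_image: "DT s t r m \<alpha> D = posT \<alpha> ` (D \<inter> LT \<alpha>)"
proof -
  have "posT \<alpha> X \<in> gridT s t r m \<alpha>" if "X \<in> LT \<alpha>" for X
    using bij_betw_posT[of \<alpha>] that unfolding bij_betw_def by blast
  then show ?thesis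
    unfolding DT_def using phiT_posT posT_phiT phiT_in_LT by (auto intro!: image_eqI)
qed

lemma DS_eq_image: "DS s t r m \<beta> D = posS \<beta> ` (D \<inter> LS \<beta>)"
proof -
  have "posS \<beta> X \<in> gridS s t r m \<beta>" if "X \<in> LS \<beta>" for X
    using bij_betw_posS[of \<beta>] that unfolding bij_betw_def by blast
  then show ?thesis
    unfolding DS_def using phiS_posS posS_phiS phiS_in_LS by (auto intro!: image_eqI)
qed

lemma posS_mem_DS_iff: "X \<in> LS \<beta> \<Longrightarrow> posS \<beta> X \<in> DS s t r m \<beta> D \<longleftrightarrow> X \<in> D"
  unfolding DS_eq_image using bij_betw_posS[of \<beta>] inj_on_image_mem_iff[of "posS \<beta>" "LS \<beta>" X "D \<inter> LS \<beta>"]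
  by (auto simp: bij_betw_def)

lemma gridT_column:
  assumes "1 \<le> c" "c \<le> colsT s t r m \<alpha>"
  obtains k j where "k \<in> arrowsT t r \<alpha>" "1 \<le> j" "j \<le> m (s k)" "colOff s t r m \<alpha> k + j = c"
proof -
  obtain k where "k \<in> arrowsT t r \<alpha>" "colOff s t r m \<alpha> k < c" "c \<le> colOff s t r m \<alpha> k + m (s k)"
    using offset_cover[OF finite_arrowsT assms(1)] assms(2)
    unfolding colsT_def colOff_eq_offset by blast
  then show thesis
    by (intro that[of k "c - colOff s t r m \<alpha> k"]) auto
qed

lemma posS_row_decode:
  assumes "X \<in> LS \<beta>" "k \<in> arrowsS s r \<beta>" "1 \<le> p" "p \<le> m (t k)"
    and "fst (posS \<beta> X) = rowOff s t r m \<beta> k + p"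
  shows "X = (p, snd (posS \<beta> X), k)"
  using assms rowOff_add_eq_iff[OF _ assms(2) _ _ assms(3,4)]
  by (cases X) (auto simp: mem_LS_iff posS_simp)

lemma DS_block_row_imp_phiT:
  assumes "k \<in> arrowsT t r \<alpha>" "1 \<le> p" "p \<le> m \<alpha>"
    and "y \<in> DS s t r m (s k) E" "fst y = rowOff s t r m (s k) k + p"
  shows "1 \<le> snd y" "snd y \<le> m (s k)" "colOff s t r m \<alpha> k + snd y \<le> colsT s t r m \<alpha>"
    "phiT s t r m \<alpha> (p, colOff s t r m \<alpha> k + snd y) \<in> E"
proof -
  obtain Y where Y: "Y \<in> E" "Y \<in> LS (s k)" "y = posS (s k) Y"
    using assms(4) unfolding DS_eq_image by blast
  have k: "k \<in> arrowsS s r (s k)" "t k = \<alpha>"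
    using assms(1) by (simp_all add: arrowsT_def arrowsS_def)
  then have Y_eq: "Y = (p, snd y, k)"
    using posS_row_decode[OF Y(2)] assms(2,3,5) Y(3) by simp
  then show "1 \<le> snd y" "snd y \<le> m (s k)"
    using Y(2) by (simp_all add: mem_LS_iff)
  then have Y_LT: "Y \<in> LT \<alpha>"
    using assms(1-3) by (simp add: Y_eq mem_LT_iff)
  then have "posT \<alpha> Y \<in> gridT s t r m \<alpha>"
    using bij_betw_posT[of \<alpha>] unfolding bij_betw_def by blast
  then show "colOff s t r m \<alpha> k + snd y \<le> colsT s t r m \<alpha>"
    by (simp add: Y_eq posT_simp gridT_def)
  show "phiT s t r m \<alpha> (p, colOff s t r m \<alpha> k + snd y) \<in> E"
    using phiT_posT[OF Y_LT] Y(1) by (simp add: Y_eq posT_simp)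
qed

lemma phiT_imp_DS_block_row:
  assumes "k \<in> arrowsT t r \<alpha>" "1 \<le> p" "p \<le> m \<alpha>" "1 \<le> j" "j \<le> m (s k)"
    and "phiT s t r m \<alpha> (p, colOff s t r m \<alpha> k + j) \<in> E"
  shows "(rowOff s t r m (s k) k + p, j) \<in> DS s t r m (s k) E"
proof -
  have LT: "(p, j, k) \<in> LT \<alpha>"
    using assms(1-5) by (simp add: mem_LT_iff)
  then have "(p, j, k) \<in> E"
    using phiT_posT[OF LT] assms(6) by (simp add: posT_simp)
  moreover have LS: "(p, j, k) \<in> LS (s k)"
    using assms(1-5) by (auto simp: mem_LS_iff arrowsT_def arrowsS_def)
  ultimately show ?thesis
    using posS_mem_DS_iff[OF LS] by (simp add: posS_simp)
qed

end

section \<open>Exchanging two corners of a rectangle in two adjacent rows\<close>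

context
  fixes s t :: "nat \<Rightarrow> 'v" and r :: nat and m :: "'v \<Rightarrow> nat" and \<alpha> :: 'v and i c0 c1 :: nat
  assumes rect: "1 \<le> i" "i + 1 \<le> rowsT s t r m \<alpha>" "1 \<le> c0" "c0 < c1" "c1 \<le> colsT s t r m \<alpha>"
begin

text \<open>Only the corners \<open>(i + 1, c0)\<close>, \<open>(i, c1)\<close> and one empty row segment are assumed,
  so that the exchanges also serve the partial moves in the maximality proofs.\<close>

abbreviation pt :: "nat \<times> nat \<Rightarrow> pos" where
  "pt \<equiv> phiT s t r m \<alpha>"

lemma rows_in_gridT:
  assumes "1 \<le> c" "c \<le> colsT s t r m \<alpha>"
  shows "(i, c) \<in> gridT s t r m \<alpha>" "(i + 1, c) \<in> gridT s t r m \<alpha>"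
  using assms rect unfolding gridT_def by auto

lemma rect_corners:
  obtains kP aP kQ bQ where
    "pt (i, c0) = (i, aP, kP)" "pt (i + 1, c0) = (i + 1, aP, kP)"
    "pt (i, c1) = (i, bQ, kQ)" "pt (i + 1, c1) = (i + 1, bQ, kQ)"
    "kP \<in> arrowsT t r \<alpha>" "1 \<le> aP" "aP \<le> m (s kP)" "kQ \<in> arrowsT t r \<alpha>" "1 \<le> bQ" "bQ \<le> m (s kQ)"
    "colOff s t r m \<alpha> kP + aP = c0" "colOff s t r m \<alpha> kQ + bQ = c1" "kP < kQ \<or> (kP = kQ \<and> aP < bQ)"
proof -
  obtain kP aP where P: "kP \<in> arrowsT t r \<alpha>" "1 \<le> aP" "aP \<le> m (s kP)" "colOff s t r m \<alpha> kP + aP = c0"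
    by (rule gridT_column[of c0 s t r m \<alpha>]) (use rect in auto)
  obtain kQ bQ where Q: "kQ \<in> arrowsT t r \<alpha>" "1 \<le> bQ" "bQ \<le> m (s kQ)" "colOff s t r m \<alpha> kQ + bQ = c1"
    by (rule gridT_column[of c1 s t r m \<alpha>]) (use rect in auto)
  have "i + 1 \<le> m \<alpha>"
    using rect unfolding rowsT_def by simp
  then have mem: "(p, aP, kP) \<in> LT s t r m \<alpha>" "(p, bQ, kQ) \<in> LT s t r m \<alpha>" if "p \<in> {i, i + 1}" for p
    using that P Q rect by (auto simp: mem_LT_iff)
  have "pt (p, c0) = (p, aP, kP)" "pt (p, c1) = (p, bQ, kQ)" if "p \<in> {i, i + 1}" for p
    using phiT_posT[OF mem(1)[OF that]] phiT_posT[OF mem(2)[OF that]] P(4) Q(4)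
    by (simp_all add: posT_simp)
  moreover have "kP < kQ \<or> (kP = kQ \<and> aP < bQ)"
    using colOff_add_less_iff[OF P(1) Q(1) P(2,3) Q(2,3)] P(4) Q(4) rect(4) by simp
  ultimately show thesis
    using that P Q by blast
qed

lemma chute_bottom_row:
  assumes bottom: "\<forall>c. c0 < c \<longrightarrow> c < c1 \<longrightarrow> pt (i + 1, c) \<notin> E"
    and "c0 < c" "c \<le> colsT s t r m \<alpha>" "pt (i + 1, c) \<in> E \<union> {pt (i, c0)} - {pt (i + 1, c1)}"
  shows "c1 < c"
proof -
  have "(i + 1, c) \<in> gridT s t r m \<alpha>" "(i, c0) \<in> gridT s t r m \<alpha>"
    using rows_in_gridT assms(2,3) rect by auto
  then have "pt (i + 1, c) \<noteq> pt (i, c0)"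
    by (simp add: phiT_eq_iff)
  then show ?thesis
    using assms by (metis DiffD1 DiffD2 UnE linorder_neqE_nat singletonD singletonI)
qed

lemma chute_top_row:
  assumes top: "\<forall>c. c0 < c \<longrightarrow> c < c1 \<longrightarrow> pt (i, c) \<notin> E"
    and "1 \<le> c" "c < c1" "pt (i, c) \<in> E - {pt (i, c0)} \<union> {pt (i + 1, c1)}"
  shows "c < c0"
proof -
  have "(i, c) \<in> gridT s t r m \<alpha>" "(i + 1, c1) \<in> gridT s t r m \<alpha>"
    using rows_in_gridT assms(2,3) rect by auto
  then have "pt (i, c) \<noteq> pt (i + 1, c1)"
    by (simp add: phiT_eq_iff)
  then show ?thesis
    using assms by (metis DiffD1 DiffD2 UnE linorder_neqE_nat singletonD singletonI)
qed

lemma phiT_rect_not_in_LT: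
  assumes "\<gamma> \<noteq> \<alpha>" "1 \<le> c" "c \<le> colsT s t r m \<alpha>" "p \<in> {i, i + 1}"
  shows "pt (p, c) \<notin> LT s t r m \<gamma>"
  using phiT_in_LT[of "(p, c)" s t r m \<alpha>] rows_in_gridT[OF assms(2,3)] assms(1,4)
  unfolding LT_def by auto

lemma has_diag_chain_DT_chute_swap:
  assumes B: "pt (i + 1, c0) \<in> E" and T: "pt (i, c1) \<in> E"
    and bottom: "\<forall>c. c0 < c \<longrightarrow> c < c1 \<longrightarrow> pt (i + 1, c) \<notin> E"
    and chain: "has_diag_chain (DT s t r m \<gamma> (E \<union> {pt (i, c0)} - {pt (i + 1, c1)})) n"
  shows "has_diag_chain (DT s t r m \<gamma> E) n"
proof (cases "\<gamma> = \<alpha>")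
  case False
  then have "pt (i, c0) \<notin> LT s t r m \<gamma>"
    using phiT_rect_not_in_LT rect by simp
  then have "DT s t r m \<gamma> (E \<union> {pt (i, c0)} - {pt (i + 1, c1)}) \<subseteq> DT s t r m \<gamma> E"
    unfolding DT_eq_image by auto
  then show ?thesis
    using chain has_diag_chain_mono by blast
next
  case True
  have grid: "(p, c) \<in> gridT s t r m \<alpha>" if "p \<in> {i, i + 1}" "1 \<le> c" "c \<le> colsT s t r m \<alpha>" for p c
    using rows_in_gridT that by auto
  show ?thesis
    unfolding True
  proof (rule has_diag_chain_reroute_top_left)
    show "has_diag_chain (DT s t r m \<alpha> (E \<union> {pt (i, c0)} - {pt (i + 1, c1)})) n"
      using chain True by simp
    show "DT s t r m \<alpha> (E \<union> {pt (i, c0)} - {pt (i + 1, c1)}) - {(i, c0)} \<subseteq> DT s t r m \<alpha> E"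
      unfolding DT_def using phiT_eq_iff[OF _ grid] rect by auto
    show "(i + 1, c0) \<in> DT s t r m \<alpha> E"
      unfolding DT_def using B grid rect by auto
  next
    fix y assume y: "y \<in> DT s t r m \<alpha> (E \<union> {pt (i, c0)} - {pt (i + 1, c1)})" "fst y = i + 1" "c0 < snd y"
    then have "c1 < snd y"
      using chute_bottom_row[OF bottom] unfolding DT_def gridT_def by (cases y) auto
    then show "\<exists>b. (i, b) \<in> DT s t r m \<alpha> E \<and> c0 < b \<and> b < snd y"
      using T grid rect unfolding DT_def by (intro exI[of _ c1]) auto
  qed
qed

lemma has_diag_chain_DT_inv_chute_swap:
  assumes B: "pt (i + 1, c0) \<in> E" and T: "pt (i, c1) \<in> E"
    and top: "\<forall>c. c0 < c \<longrightarrow> c < c1 \<longrightarrow> pt (i, c) \<notin> E"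
    and chain: "has_diag_chain (DT s t r m \<gamma> (E - {pt (i, c0)} \<union> {pt (i + 1, c1)})) n"
  shows "has_diag_chain (DT s t r m \<gamma> E) n"
proof (cases "\<gamma> = \<alpha>")
  case False
  then have "pt (i + 1, c1) \<notin> LT s t r m \<gamma>"
    using phiT_rect_not_in_LT rect by simp
  then have "DT s t r m \<gamma> (E - {pt (i, c0)} \<union> {pt (i + 1, c1)}) \<subseteq> DT s t r m \<gamma> E"
    unfolding DT_eq_image by auto
  then show ?thesis
    using chain has_diag_chain_mono by blast
next
  case True
  have grid: "(p, c) \<in> gridT s t r m \<alpha>" if "p \<in> {i, i + 1}" "1 \<le> c" "c \<le> colsT s t r m \<alpha>" for p c
    using rows_in_gridT that by auto
  show ?thesis
    unfolding True
  proof (rule has_diag_chain_reroute_bottom_right)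
    show "has_diag_chain (DT s t r m \<alpha> (E - {pt (i, c0)} \<union> {pt (i + 1, c1)})) n"
      using chain True by simp
    show "DT s t r m \<alpha> (E - {pt (i, c0)} \<union> {pt (i + 1, c1)}) - {(i + 1, c1)} \<subseteq> DT s t r m \<alpha> E"
      unfolding DT_def using phiT_eq_iff[OF _ grid] rect by auto
    show "(i, c1) \<in> DT s t r m \<alpha> E"
      unfolding DT_def using T grid rect by auto
  next
    fix y assume y: "y \<in> DT s t r m \<alpha> (E - {pt (i, c0)} \<union> {pt (i + 1, c1)})" "fst y = i" "snd y < c1"
    then have "snd y < c0"
      using chute_top_row[OF top] unfolding DT_def gridT_def by (cases y) auto
    then show "\<exists>a. (i + 1, a) \<in> DT s t r m \<alpha> E \<and> snd y < a \<and> a < c1"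
      using B grid rect unfolding DT_def by (intro exI[of _ c0]) auto
  qed
qed

lemma has_diag_chain_DS_chute_swap:
  assumes B: "pt (i + 1, c0) \<in> E" and T: "pt (i, c1) \<in> E"
    and bottom: "\<forall>c. c0 < c \<longrightarrow> c < c1 \<longrightarrow> pt (i + 1, c) \<notin> E"
    and chain: "has_diag_chain (DS s t r m \<beta> (E \<union> {pt (i, c0)} - {pt (i + 1, c1)})) n"
  shows "has_diag_chain (DS s t r m \<beta> E) n"
proof -
  obtain kP aP kQ bQ where corners:
    "pt (i, c0) = (i, aP, kP)" "pt (i + 1, c0) = (i + 1, aP, kP)"
    "pt (i, c1) = (i, bQ, kQ)" "pt (i + 1, c1) = (i + 1, bQ, kQ)"
    "kP \<in> arrowsT t r \<alpha>" "1 \<le> aP" "aP \<le> m (s kP)" "kQ \<in> arrowsT t r \<alpha>" "1 \<le> bQ" "bQ \<le> m (s kQ)"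
    "colOff s t r m \<alpha> kP + aP = c0" "colOff s t r m \<alpha> kQ + bQ = c1" "kP < kQ \<or> (kP = kQ \<and> aP < bQ)"
    by (rule rect_corners)
  have rows: "1 \<le> i" "i \<le> m \<alpha>" "1 \<le> i + 1" "i + 1 \<le> m \<alpha>"
    using rect by (simp_all add: rowsT_def)
  show ?thesis
  proof (cases "\<beta> = s kP")
    case False
    then have "pt (i, c0) \<notin> LS s t r m \<beta>"
      using corners(1) by (simp add: LS_def arrK_def)
    then have "DS s t r m \<beta> (E \<union> {pt (i, c0)} - {pt (i + 1, c1)}) \<subseteq> DS s t r m \<beta> E"
      unfolding DS_eq_image by auto
    then show ?thesis
      using chain has_diag_chain_mono by blast
  next
    case True
    define R where "R = rowOff s t r m \<beta> kP"
    show ?thesis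
    proof (rule has_diag_chain_reroute_top_left[OF chain])
      show "DS s t r m \<beta> (E \<union> {pt (i, c0)} - {pt (i + 1, c1)}) - {(R + i, aP)} \<subseteq> DS s t r m \<beta> E"
        unfolding DS_eq_image using corners(1) by (force simp: posS_simp R_def)
      show "(R + i + 1, aP) \<in> DS s t r m \<beta> E"
        using phiT_imp_DS_block_row[where s = s and m = m, OF corners(5) rows(3,4) corners(6,7)] B corners(2,11) True R_def
        by (simp add: add.assoc)
    next
      fix y assume y: "y \<in> DS s t r m \<beta> (E \<union> {pt (i, c0)} - {pt (i + 1, c1)})"
        "fst y = R + i + 1" "aP < snd y"
      have "fst y = rowOff s t r m (s kP) kP + (i + 1)"
        using y(2) True R_def by simp
      note column = DS_block_row_imp_phiT[where s = s and m = m, OF corners(5) rows(3,4) y(1)[unfolded True] this]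
      have "c1 < colOff s t r m \<alpha> kP + snd y"
        using chute_bottom_row[OF bottom _ column(3,4)] y(3) corners(11) by simp
      then have "kP = kQ \<and> aP < bQ \<and> bQ < snd y"
        using colOff_add_less_iff[where s = s and m = m, OF corners(8,5,9,10) column(1,2)] corners(12,13)
        by auto
      moreover have "(R + i, bQ) \<in> DS s t r m \<beta> E" if "kP = kQ"
        using phiT_imp_DS_block_row[where s = s and m = m, OF corners(8) rows(1,2) corners(9,10)] T corners(3,12) True R_def that
        by simp
      ultimately show "\<exists>b. (R + i, b) \<in> DS s t r m \<beta> E \<and> aP < b \<and> b < snd y"
        by blast
    qed
  qed
qed

lemma has_diag_chain_DS_inv_chute_swap:
  assumes B: "pt (i + 1, c0) \<in> E" and T: "pt (i, c1) \<in> E"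
    and top: "\<forall>c. c0 < c \<longrightarrow> c < c1 \<longrightarrow> pt (i, c) \<notin> E"
    and chain: "has_diag_chain (DS s t r m \<beta> (E - {pt (i, c0)} \<union> {pt (i + 1, c1)})) n"
  shows "has_diag_chain (DS s t r m \<beta> E) n"
proof -
  obtain kP aP kQ bQ where corners:
    "pt (i, c0) = (i, aP, kP)" "pt (i + 1, c0) = (i + 1, aP, kP)"
    "pt (i, c1) = (i, bQ, kQ)" "pt (i + 1, c1) = (i + 1, bQ, kQ)"
    "kP \<in> arrowsT t r \<alpha>" "1 \<le> aP" "aP \<le> m (s kP)" "kQ \<in> arrowsT t r \<alpha>" "1 \<le> bQ" "bQ \<le> m (s kQ)"
    "colOff s t r m \<alpha> kP + aP = c0" "colOff s t r m \<alpha> kQ + bQ = c1" "kP < kQ \<or> (kP = kQ \<and> aP < bQ)"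
    by (rule rect_corners)
  have rows: "1 \<le> i" "i \<le> m \<alpha>" "1 \<le> i + 1" "i + 1 \<le> m \<alpha>"
    using rect by (simp_all add: rowsT_def)
  show ?thesis
  proof (cases "\<beta> = s kQ")
    case False
    then have "pt (i + 1, c1) \<notin> LS s t r m \<beta>"
      using corners(4) by (simp add: LS_def arrK_def)
    then have "DS s t r m \<beta> (E - {pt (i, c0)} \<union> {pt (i + 1, c1)}) \<subseteq> DS s t r m \<beta> E"
      unfolding DS_eq_image by auto
    then show ?thesis
      using chain has_diag_chain_mono by blast
  next
    case True
    define R where "R = rowOff s t r m \<beta> kQ"
    show ?thesis
    proof (rule has_diag_chain_reroute_bottom_right[OF chain])
      show "DS s t r m \<beta> (E - {pt (i, c0)} \<union> {pt (i + 1, c1)}) - {(R + i + 1, bQ)} \<subseteq> DS s t r m \<beta> E"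
        unfolding DS_eq_image using corners(4) by (force simp: posS_simp R_def)
      show "(R + i, bQ) \<in> DS s t r m \<beta> E"
        using phiT_imp_DS_block_row[where s = s and m = m, OF corners(8) rows(1,2) corners(9,10)] T corners(3,12) True R_def
        by simp
    next
      fix y assume y: "y \<in> DS s t r m \<beta> (E - {pt (i, c0)} \<union> {pt (i + 1, c1)})"
        "fst y = R + i" "snd y < bQ"
      have "fst y = rowOff s t r m (s kQ) kQ + i"
        using y(2) True R_def by simp
      note column = DS_block_row_imp_phiT[where s = s and m = m, OF corners(8) rows(1,2) y(1)[unfolded True] this]
      have "colOff s t r m \<alpha> kQ + snd y < c0"
        using chute_top_row[OF top _ _ column(4)] column(1) y(3) corners(12) by simp
      then have "kP = kQ \<and> snd y < aP"
        using colOff_add_less_iff[where s = s and m = m, OF corners(8,5) column(1,2) corners(6,7)] corners(11,13)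
        by auto
      moreover have "(R + i + 1, aP) \<in> DS s t r m \<beta> E" if "kP = kQ"
        using phiT_imp_DS_block_row[where s = s and m = m, OF corners(5) rows(3,4) corners(6,7)] B corners(2,11) True R_def that
        by (simp add: add.assoc)
      ultimately show "\<exists>a. (R + i + 1, a) \<in> DS s t r m \<beta> E \<and> snd y < a \<and> a < bQ"
        using corners(13) by blast
    qed
  qed
qed

lemma u_compatible_chute_swap:
  assumes comp: "u_compatible Vs Vt s t r m u E"
    and swap: "pt (i + 1, c0) \<in> E" "pt (i, c1) \<in> E" "\<forall>c. c0 < c \<longrightarrow> c < c1 \<longrightarrow> pt (i + 1, c) \<notin> E"
  shows "u_compatible Vs Vt s t r m u (E \<union> {pt (i, c0)} - {pt (i + 1, c1)})"
  unfolding u_compatible_def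
proof (intro conjI ballI)
  have "(i, c0) \<in> gridT s t r m \<alpha>"
    using rows_in_gridT rect by simp
  then have "pt (i, c0) \<in> LT s t r m \<alpha>"
    by (rule phiT_in_LT)
  then show "E \<union> {pt (i, c0)} - {pt (i + 1, c1)} \<subseteq> Lset s t r m"
    using comp LT_subset_Lset[of s t r m \<alpha>] unfolding u_compatible_def by blast
  show "\<not> has_diag_chain (DT s t r m \<gamma> (E \<union> {pt (i, c0)} - {pt (i + 1, c1)})) (u \<gamma> + 1)" if "\<gamma> \<in> Vt" for \<gamma>
    using has_diag_chain_DT_chute_swap[OF swap] comp that unfolding u_compatible_def by blast
  show "\<not> has_diag_chain (DS s t r m \<beta> (E \<union> {pt (i, c0)} - {pt (i + 1, c1)})) (u \<beta> + 1)" if "\<beta> \<in> Vs" for \<beta>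
    using has_diag_chain_DS_chute_swap[OF swap] comp that unfolding u_compatible_def by blast
qed

lemma u_compatible_inv_chute_swap:
  assumes comp: "u_compatible Vs Vt s t r m u E"
    and swap: "pt (i + 1, c0) \<in> E" "pt (i, c1) \<in> E" "\<forall>c. c0 < c \<longrightarrow> c < c1 \<longrightarrow> pt (i, c) \<notin> E"
  shows "u_compatible Vs Vt s t r m u (E - {pt (i, c0)} \<union> {pt (i + 1, c1)})"
  unfolding u_compatible_def
proof (intro conjI ballI)
  have "(i + 1, c1) \<in> gridT s t r m \<alpha>"
    using rows_in_gridT rect by simp
  then have "pt (i + 1, c1) \<in> LT s t r m \<alpha>"
    by (rule phiT_in_LT)
  then show "E - {pt (i, c0)} \<union> {pt (i + 1, c1)} \<subseteq> Lset s t r m"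
    using comp LT_subset_Lset[of s t r m \<alpha>] unfolding u_compatible_def by blast
  show "\<not> has_diag_chain (DT s t r m \<gamma> (E - {pt (i, c0)} \<union> {pt (i + 1, c1)})) (u \<gamma> + 1)" if "\<gamma> \<in> Vt" for \<gamma>
    using has_diag_chain_DT_inv_chute_swap[OF swap] comp that unfolding u_compatible_def by blast
  show "\<not> has_diag_chain (DS s t r m \<beta> (E - {pt (i, c0)} \<union> {pt (i + 1, c1)})) (u \<beta> + 1)" if "\<beta> \<in> Vs" for \<beta>
    using has_diag_chain_DS_inv_chute_swap[OF swap] comp that unfolding u_compatible_def by blast
qed

end

lemma phiT_two_rows_eq_iff:
  assumes "1 \<le> i" "i + 1 \<le> rowsT s t r m \<alpha>" "p \<in> {i, i + 1}" "p' \<in> {i, i + 1}"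
    "1 \<le> c" "c \<le> colsT s t r m \<alpha>" "1 \<le> c'" "c' \<le> colsT s t r m \<alpha>"
  shows "phiT s t r m \<alpha> (p, c) = phiT s t r m \<alpha> (p', c') \<longleftrightarrow> p = p' \<and> c = c'"
  using assms phiT_eq_iff[of "(p, c)" s t r m \<alpha> "(p', c')"] unfolding gridT_def by auto

lemma hchuteE:
  assumes "hchute Vt s t r m D D'"
  obtains \<alpha> i c0 c1 where "\<alpha> \<in> Vt"
    "1 \<le> i" "i + 1 \<le> rowsT s t r m \<alpha>" "1 \<le> c0" "c0 < c1" "c1 \<le> colsT s t r m \<alpha>"
    "phiT s t r m \<alpha> (i + 1, c0) \<in> D" "phiT s t r m \<alpha> (i, c1) \<in> D" "phiT s t r m \<alpha> (i + 1, c1) \<in> D"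
    "phiT s t r m \<alpha> (i, c0) \<notin> D"
    "\<forall>c. c0 < c \<longrightarrow> c < c1 \<longrightarrow> phiT s t r m \<alpha> (i, c) \<notin> D \<and> phiT s t r m \<alpha> (i + 1, c) \<notin> D"
    "D' = D \<union> {phiT s t r m \<alpha> (i, c0)} - {phiT s t r m \<alpha> (i + 1, c1)}"
proof -
  obtain \<alpha> i c0 l where chute: "\<alpha> \<in> Vt" "2 \<le> l" "1 \<le> i" "i + 1 \<le> rowsT s t r m \<alpha>" "1 \<le> c0"
    "c0 + l - 1 \<le> colsT s t r m \<alpha>"
    "DT s t r m \<alpha> D \<inter> ({i..i + 1} \<times> {c0..c0 + l - 1}) = {(i + 1, c0), (i, c0 + l - 1), (i + 1, c0 + l - 1)}"
    "D' = D \<union> {phiT s t r m \<alpha> (i, c0)} - {phiT s t r m \<alpha> (i + 1, c0 + l - 1)}"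
    using assms unfolding hchute_def by blast
  define c1 where "c1 = c0 + l - 1"
  note chute = chute[folded c1_def]
  have "c0 < c1"
    using chute(2) unfolding c1_def by simp
  have pattern: "phiT s t r m \<alpha> (p, c) \<in> D \<longleftrightarrow> (p, c) \<in> {(i + 1, c0), (i, c1), (i + 1, c1)}"
    if "p \<in> {i, i + 1}" "c0 \<le> c" "c \<le> c1" for p c
  proof -
    have "(p, c) \<in> gridT s t r m \<alpha>"
      using that chute(3-6) unfolding gridT_def by auto
    then have "phiT s t r m \<alpha> (p, c) \<in> D \<longleftrightarrow> (p, c) \<in> DT s t r m \<alpha> D \<inter> ({i..i + 1} \<times> {c0..c1})"
      using that unfolding DT_def by auto
    also have "\<dots> \<longleftrightarrow> (p, c) \<in> {(i + 1, c0), (i, c1), (i + 1, c1)}"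
      by (simp only: chute(7))
    finally show ?thesis .
  qed
  have "phiT s t r m \<alpha> (i + 1, c0) \<in> D" "phiT s t r m \<alpha> (i, c1) \<in> D" "phiT s t r m \<alpha> (i + 1, c1) \<in> D"
    "phiT s t r m \<alpha> (i, c0) \<notin> D"
    using pattern[of "i + 1" c0] pattern[of i c1] pattern[of "i + 1" c1] pattern[of i c0] \<open>c0 < c1\<close>
    by auto
  moreover have "\<forall>c. c0 < c \<longrightarrow> c < c1 \<longrightarrow> phiT s t r m \<alpha> (i, c) \<notin> D \<and> phiT s t r m \<alpha> (i + 1, c) \<notin> D"
    using pattern[of i] pattern[of "i + 1"] by auto
  moreover have "c1 \<le> colsT s t r m \<alpha>" "D' = D \<union> {phiT s t r m \<alpha> (i, c0)} - {phiT s t r m \<alpha> (i + 1, c1)}"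
    using chute(6,8) by auto
  ultimately show thesis
    using that chute(1,3,4,5) \<open>c0 < c1\<close> by blast
qed

lemma hchute_u_compatible:
  assumes "u_compatible Vs Vt s t r m u D" "hchute Vt s t r m D D'"
  shows "u_compatible Vs Vt s t r m u D'"
proof -
  obtain \<alpha> i c0 c1 where rect: "1 \<le> i" "i + 1 \<le> rowsT s t r m \<alpha>" "1 \<le> c0" "c0 < c1" "c1 \<le> colsT s t r m \<alpha>"
    and swap: "phiT s t r m \<alpha> (i + 1, c0) \<in> D" "phiT s t r m \<alpha> (i, c1) \<in> D"
      "\<forall>c. c0 < c \<longrightarrow> c < c1 \<longrightarrow> phiT s t r m \<alpha> (i + 1, c) \<notin> D"
    and D': "D' = D \<union> {phiT s t r m \<alpha> (i, c0)} - {phiT s t r m \<alpha> (i + 1, c1)}"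
    using assms(2) by (elim hchuteE) blast
  show ?thesis
    unfolding D' using u_compatible_chute_swap[OF rect assms(1) swap] .
qed

lemma hchute_u_compatible_inverse:
  assumes "u_compatible Vs Vt s t r m u D" "hchute Vt s t r m D' D"
  shows "u_compatible Vs Vt s t r m u D'"
proof -
  obtain \<alpha> i c0 c1 where rect: "1 \<le> i" "i + 1 \<le> rowsT s t r m \<alpha>" "1 \<le> c0" "c0 < c1" "c1 \<le> colsT s t r m \<alpha>"
    and chute: "phiT s t r m \<alpha> (i + 1, c0) \<in> D'" "phiT s t r m \<alpha> (i, c1) \<in> D'" "phiT s t r m \<alpha> (i + 1, c1) \<in> D'"
      "phiT s t r m \<alpha> (i, c0) \<notin> D'"
      "\<forall>c. c0 < c \<longrightarrow> c < c1 \<longrightarrow> phiT s t r m \<alpha> (i, c) \<notin> D'"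
    and D: "D = D' \<union> {phiT s t r m \<alpha> (i, c0)} - {phiT s t r m \<alpha> (i + 1, c1)}"
    using assms(2) by (elim hchuteE) blast
  let ?pt = "phiT s t r m \<alpha>"
  have "D - {?pt (i, c0)} \<union> {?pt (i + 1, c1)} = D'"
    unfolding D using chute(3,4) by auto
  moreover have "?pt (i + 1, c0) \<in> D" "?pt (i, c1) \<in> D" "\<forall>c. c0 < c \<longrightarrow> c < c1 \<longrightarrow> ?pt (i, c) \<notin> D"
    unfolding D using chute(1,2,5) rect by (auto simp: phiT_two_rows_eq_iff)
  ultimately show ?thesis
    using u_compatible_inv_chute_swap[OF rect assms(1)] by metis
qed

lemma u_compatible_chute_swap_twice:
  assumes rect: "1 \<le> i" "i + 1 \<le> rowsT s t r m \<alpha>" "1 \<le> c0" "c0 < c" "c < c1" "c1 \<le> colsT s t r m \<alpha>"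
    and comp: "u_compatible Vs Vt s t r m u E"
    and corners: "phiT s t r m \<alpha> (i + 1, c0) \<in> E" "phiT s t r m \<alpha> (i + 1, c) \<in> E" "phiT s t r m \<alpha> (i, c1) \<in> E"
    and bottom: "\<forall>c'. c0 < c' \<longrightarrow> c' < c1 \<longrightarrow> c' \<noteq> c \<longrightarrow> phiT s t r m \<alpha> (i + 1, c') \<notin> E"
  shows "u_compatible Vs Vt s t r m u
           (E \<union> {phiT s t r m \<alpha> (i, c0), phiT s t r m \<alpha> (i, c)}
              - {phiT s t r m \<alpha> (i + 1, c), phiT s t r m \<alpha> (i + 1, c1)})"
proof -
  let ?pt = "phiT s t r m \<alpha>"
  have "c \<le> colsT s t r m \<alpha>" "1 \<le> c"
    using rect by simp_all
  then have neq: "?pt (i, c0) \<noteq> ?pt (i + 1, c1)" "?pt (i, c0) \<noteq> ?pt (i + 1, c)" "?pt (i, c) \<noteq> ?pt (i + 1, c)"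
    "?pt (i, c) \<noteq> ?pt (i + 1, c1)" "?pt (i + 1, c0) \<noteq> ?pt (i + 1, c1)"
    "\<forall>c'. 1 \<le> c' \<longrightarrow> c' \<le> colsT s t r m \<alpha> \<longrightarrow> ?pt (i + 1, c') \<noteq> ?pt (i, c)"
    using rect by (simp_all add: phiT_two_rows_eq_iff)
  define F where "F = E \<union> {?pt (i, c)} - {?pt (i + 1, c1)}"
  have "\<forall>c'. c < c' \<longrightarrow> c' < c1 \<longrightarrow> ?pt (i + 1, c') \<notin> E"
    using bottom rect by auto
  then have "u_compatible Vs Vt s t r m u F"
    unfolding F_def by (rule u_compatible_chute_swap[OF rect(1,2) \<open>1 \<le> c\<close> rect(5,6) comp corners(2,3)])
  moreover have "?pt (i + 1, c0) \<in> F" "?pt (i, c) \<in> F"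
    unfolding F_def using corners(1) neq by auto
  moreover have "\<forall>c'. c0 < c' \<longrightarrow> c' < c \<longrightarrow> ?pt (i + 1, c') \<notin> F"
    unfolding F_def using bottom neq(6) rect by auto
  ultimately have "u_compatible Vs Vt s t r m u (F \<union> {?pt (i, c0)} - {?pt (i + 1, c)})"
    using u_compatible_chute_swap[OF rect(1-4) \<open>c \<le> colsT s t r m \<alpha>\<close>] by blast
  moreover have "F \<union> {?pt (i, c0)} - {?pt (i + 1, c)} = E \<union> {?pt (i, c0), ?pt (i, c)} - {?pt (i + 1, c), ?pt (i + 1, c1)}"
    unfolding F_def using neq by auto
  ultimately show ?thesis
    by simp
qed

lemma u_compatible_inv_chute_swap_twice:
  assumes rect: "1 \<le> i" "i + 1 \<le> rowsT s t r m \<alpha>" "1 \<le> c0" "c0 < c" "c < c1" "c1 \<le> colsT s t r m \<alpha>"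
    and comp: "u_compatible Vs Vt s t r m u E"
    and corners: "phiT s t r m \<alpha> (i + 1, c0) \<in> E" "phiT s t r m \<alpha> (i, c) \<in> E" "phiT s t r m \<alpha> (i, c1) \<in> E"
    and top: "\<forall>c'. c0 < c' \<longrightarrow> c' < c1 \<longrightarrow> c' \<noteq> c \<longrightarrow> phiT s t r m \<alpha> (i, c') \<notin> E"
  shows "u_compatible Vs Vt s t r m u
           (E - {phiT s t r m \<alpha> (i, c0), phiT s t r m \<alpha> (i, c)}
              \<union> {phiT s t r m \<alpha> (i + 1, c), phiT s t r m \<alpha> (i + 1, c1)})"
proof -
  let ?pt = "phiT s t r m \<alpha>"
  have "c \<le> colsT s t r m \<alpha>" "1 \<le> c"
    using rect by simp_all
  then have neq: "?pt (i, c0) \<noteq> ?pt (i, c1)" "?pt (i + 1, c) \<noteq> ?pt (i, c)"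
    "\<forall>c'. 1 \<le> c' \<longrightarrow> c' \<le> colsT s t r m \<alpha> \<longrightarrow> ?pt (i, c') \<noteq> ?pt (i + 1, c)"
    using rect by (simp_all add: phiT_two_rows_eq_iff)
  define F where "F = E - {?pt (i, c0)} \<union> {?pt (i + 1, c)}"
  have "\<forall>c'. c0 < c' \<longrightarrow> c' < c \<longrightarrow> ?pt (i, c') \<notin> E"
    using top rect by auto
  then have "u_compatible Vs Vt s t r m u F"
    unfolding F_def by (rule u_compatible_inv_chute_swap[OF rect(1-4) \<open>c \<le> colsT s t r m \<alpha>\<close> comp corners(1,2)])
  moreover have "?pt (i + 1, c) \<in> F" "?pt (i, c1) \<in> F"
    unfolding F_def using corners(3) neq by auto
  moreover have "\<forall>c'. c < c' \<longrightarrow> c' < c1 \<longrightarrow> ?pt (i, c') \<notin> F"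
    unfolding F_def using top neq(3) rect by auto
  ultimately have "u_compatible Vs Vt s t r m u (F - {?pt (i, c)} \<union> {?pt (i + 1, c1)})"
    using u_compatible_inv_chute_swap[OF rect(1,2) \<open>1 \<le> c\<close> rect(5,6)] by blast
  moreover have "F - {?pt (i, c)} \<union> {?pt (i + 1, c1)} = E - {?pt (i, c0), ?pt (i, c)} \<union> {?pt (i + 1, c), ?pt (i + 1, c1)}"
    unfolding F_def using neq by auto
  ultimately show ?thesis
    by simp
qed

lemma u_compatible_subset:
  assumes comp: "u_compatible Vs Vt s t r m u E" and sub: "E' \<subseteq> E"
  shows "u_compatible Vs Vt s t r m u E'"
  unfolding u_compatible_def
proof (intro conjI ballI notI)
  show "E' \<subseteq> Lset s t r m"
    using comp sub unfolding u_compatible_def by blast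
next
  fix \<alpha> assume "\<alpha> \<in> Vt" "has_diag_chain (DT s t r m \<alpha> E') (u \<alpha> + 1)"
  moreover have "DT s t r m \<alpha> E' \<subseteq> DT s t r m \<alpha> E"
    using sub unfolding DT_def by auto
  ultimately show False
    using comp has_diag_chain_mono unfolding u_compatible_def by metis
next
  fix \<beta> assume "\<beta> \<in> Vs" "has_diag_chain (DS s t r m \<beta> E') (u \<beta> + 1)"
  moreover have "DS s t r m \<beta> E' \<subseteq> DS s t r m \<beta> E"
    using sub unfolding DS_def by auto
  ultimately show False
    using comp has_diag_chain_mono unfolding u_compatible_def by metis
qed

lemma concurrent_vertex_map_iff:
  "concurrent_vertex_map Vs Vt s t r m u C \<longleftrightarrow>
     u_compatible Vs Vt s t r m u C \<and> (\<forall>X. X \<notin> C \<longrightarrow> \<not> u_compatible Vs Vt s t r m u (insert X C))"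
proof -
  have "(\<forall>D. u_compatible Vs Vt s t r m u D \<and> C \<subseteq> D \<longrightarrow> D = C) \<longleftrightarrow>
          (\<forall>X. X \<notin> C \<longrightarrow> \<not> u_compatible Vs Vt s t r m u (insert X C))"
  proof (intro iffI allI impI notI)
    fix X assume "\<forall>D. u_compatible Vs Vt s t r m u D \<and> C \<subseteq> D \<longrightarrow> D = C" "X \<notin> C"
      "u_compatible Vs Vt s t r m u (insert X C)"
    then show False
      by blast
  next
    fix D assume no_ext: "\<forall>X. X \<notin> C \<longrightarrow> \<not> u_compatible Vs Vt s t r m u (insert X C)"
      and D: "u_compatible Vs Vt s t r m u D \<and> C \<subseteq> D"
    show "D = C"
    proof (rule ccontr)
      assume "D \<noteq> C"
      then obtain X where "X \<in> D" "X \<notin> C"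
        using D by blast
      then have "u_compatible Vs Vt s t r m u (insert X C)"
        using D u_compatible_subset[of Vs Vt s t r m u D "insert X C"] by blast
      then show False
        using no_ext \<open>X \<notin> C\<close> by blast
    qed
  qed
  then show ?thesis
    unfolding concurrent_vertex_map_def by blast
qed

lemma hchute_concurrent_vertex_map:
  assumes cvm: "concurrent_vertex_map Vs Vt s t r m u C" and move: "hchute Vt s t r m C C'"
  shows "concurrent_vertex_map Vs Vt s t r m u C'"
proof -
  obtain \<alpha> i c0 c1 where rect: "1 \<le> i" "i + 1 \<le> rowsT s t r m \<alpha>" "1 \<le> c0" "c0 < c1" "c1 \<le> colsT s t r m \<alpha>"
    and chute: "phiT s t r m \<alpha> (i + 1, c0) \<in> C" "phiT s t r m \<alpha> (i, c1) \<in> C" "phiT s t r m \<alpha> (i + 1, c1) \<in> C"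
      "phiT s t r m \<alpha> (i, c0) \<notin> C"
      "\<forall>c. c0 < c \<longrightarrow> c < c1 \<longrightarrow> phiT s t r m \<alpha> (i, c) \<notin> C \<and> phiT s t r m \<alpha> (i + 1, c) \<notin> C"
    and C': "C' = C \<union> {phiT s t r m \<alpha> (i, c0)} - {phiT s t r m \<alpha> (i + 1, c1)}"
    using move by (elim hchuteE) blast
  let ?pt = "phiT s t r m \<alpha>"
  have comp: "u_compatible Vs Vt s t r m u C"
    and maximal: "\<And>Y. Y \<notin> C \<Longrightarrow> \<not> u_compatible Vs Vt s t r m u (insert Y C)"
    using cvm unfolding concurrent_vertex_map_iff by auto
  have C'_corners: "?pt (i + 1, c0) \<in> C'" "?pt (i, c1) \<in> C'" "?pt (i, c0) \<in> C'"
    unfolding C' using chute(1,2) rect by (auto simp: phiT_two_rows_eq_iff)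
  have C'_top: "?pt (i, c) \<notin> C'" if "c0 < c" "c < c1" for c
    unfolding C' using chute(5) that rect by (auto simp: phiT_two_rows_eq_iff)
  have "\<not> u_compatible Vs Vt s t r m u (insert X C')" if X: "X \<notin> C'" for X
  proof
    assume compX: "u_compatible Vs Vt s t r m u (insert X C')"
    consider (Q) "X = ?pt (i + 1, c1)"
      | (top) c where "c0 < c" "c < c1" "X = ?pt (i, c)"
      | (other) "X \<noteq> ?pt (i + 1, c1)" "\<forall>c. c0 < c \<longrightarrow> c < c1 \<longrightarrow> X \<noteq> ?pt (i, c)"
      by blast
    then show False
    proof cases
      case Q
      then have "insert X C' = insert (?pt (i, c0)) C"
        unfolding C' using chute(3) by auto
      then show False
        using compX maximal[OF chute(4)] by simp
    next
      case (top c)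
      have "?pt (i + 1, c) \<notin> C" "X \<notin> C"
        using chute(5) top by blast+
      have "\<forall>c'. c0 < c' \<longrightarrow> c' < c1 \<longrightarrow> c' \<noteq> c \<longrightarrow> ?pt (i, c') \<notin> insert X C'"
        using C'_top top rect by (auto simp: phiT_two_rows_eq_iff)
      then have "u_compatible Vs Vt s t r m u
          (insert X C' - {?pt (i, c0), ?pt (i, c)} \<union> {?pt (i + 1, c), ?pt (i + 1, c1)})"
        using u_compatible_inv_chute_swap_twice[OF rect(1-3) top(1,2) rect(5) compX] C'_corners top(3)
        by simp
      moreover have "insert X C' - {?pt (i, c0), ?pt (i, c)} \<union> {?pt (i + 1, c), ?pt (i + 1, c1)}
          = insert (?pt (i + 1, c)) C"
        unfolding C' using top(3) \<open>X \<notin> C\<close> chute(3,4) by auto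
      ultimately show False
        using maximal[OF \<open>?pt (i + 1, c) \<notin> C\<close>] by simp
    next
      case other
      have "\<forall>c. c0 < c \<longrightarrow> c < c1 \<longrightarrow> ?pt (i, c) \<notin> insert X C'"
        using other C'_top by auto
      then have "u_compatible Vs Vt s t r m u (insert X C' - {?pt (i, c0)} \<union> {?pt (i + 1, c1)})"
        using u_compatible_inv_chute_swap[OF rect compX] C'_corners(1,2) by simp
      moreover have "insert X C' - {?pt (i, c0)} \<union> {?pt (i + 1, c1)} = insert X C"
        using X chute(3,4) unfolding C' by blast
      moreover have "X \<notin> C"
        using X other(1) unfolding C' by blast
      ultimately show False
        using maximal by simp
    qed
  qed
  then show ?thesis
    using hchute_u_compatible[OF comp move] unfolding concurrent_vertex_map_iff by blast
qed

lemma hchute_concurrent_vertex_map_inverse: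
  assumes cvm: "concurrent_vertex_map Vs Vt s t r m u C" and move: "hchute Vt s t r m C' C"
  shows "concurrent_vertex_map Vs Vt s t r m u C'"
proof -
  obtain \<alpha> i c0 c1 where rect: "1 \<le> i" "i + 1 \<le> rowsT s t r m \<alpha>" "1 \<le> c0" "c0 < c1" "c1 \<le> colsT s t r m \<alpha>"
    and chute: "phiT s t r m \<alpha> (i + 1, c0) \<in> C'" "phiT s t r m \<alpha> (i, c1) \<in> C'" "phiT s t r m \<alpha> (i + 1, c1) \<in> C'"
      "phiT s t r m \<alpha> (i, c0) \<notin> C'"
      "\<forall>c. c0 < c \<longrightarrow> c < c1 \<longrightarrow> phiT s t r m \<alpha> (i, c) \<notin> C' \<and> phiT s t r m \<alpha> (i + 1, c) \<notin> C'"
    and C: "C = C' \<union> {phiT s t r m \<alpha> (i, c0)} - {phiT s t r m \<alpha> (i + 1, c1)}"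
    using move by (elim hchuteE) blast
  let ?pt = "phiT s t r m \<alpha>"
  have comp: "u_compatible Vs Vt s t r m u C"
    and maximal: "\<And>Y. Y \<notin> C \<Longrightarrow> \<not> u_compatible Vs Vt s t r m u (insert Y C)"
    using cvm unfolding concurrent_vertex_map_iff by auto
  have PQ: "?pt (i, c0) \<noteq> ?pt (i + 1, c1)"
    using rect by (simp add: phiT_two_rows_eq_iff)
  then have Q_notin: "?pt (i + 1, c1) \<notin> C"
    unfolding C by auto
  have "\<not> u_compatible Vs Vt s t r m u (insert X C')" if X: "X \<notin> C'" for X
  proof
    assume compX: "u_compatible Vs Vt s t r m u (insert X C')"
    consider (P) "X = ?pt (i, c0)"
      | (bottom) c where "c0 < c" "c < c1" "X = ?pt (i + 1, c)"
      | (other) "X \<noteq> ?pt (i, c0)" "\<forall>c. c0 < c \<longrightarrow> c < c1 \<longrightarrow> X \<noteq> ?pt (i + 1, c)"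
      by blast
    then show False
    proof cases
      case P
      then have "insert X C' = insert (?pt (i + 1, c1)) C"
        unfolding C using chute(3) by auto
      then show False
        using compX maximal[OF Q_notin] by simp
    next
      case (bottom c)
      have "?pt (i, c) \<notin> C" "?pt (i, c) \<noteq> X" "X \<noteq> ?pt (i, c0)"
        unfolding C using chute(5) bottom rect by (auto simp: phiT_two_rows_eq_iff)
      have "\<forall>c'. c0 < c' \<longrightarrow> c' < c1 \<longrightarrow> c' \<noteq> c \<longrightarrow> ?pt (i + 1, c') \<notin> insert X C'"
        using chute(5) bottom rect by (auto simp: phiT_two_rows_eq_iff)
      then have "u_compatible Vs Vt s t r m u
          (insert X C' \<union> {?pt (i, c0), ?pt (i, c)} - {?pt (i + 1, c), ?pt (i + 1, c1)})"
        using u_compatible_chute_swap_twice[OF rect(1-3) bottom(1,2) rect(5) compX] chute(1,2) bottom(3)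
        by simp
      moreover have "insert X C' \<union> {?pt (i, c0), ?pt (i, c)} - {?pt (i + 1, c), ?pt (i + 1, c1)}
          = insert (?pt (i, c)) C"
        unfolding C using X bottom PQ \<open>?pt (i, c) \<noteq> X\<close> \<open>X \<noteq> ?pt (i, c0)\<close> rect
        by (auto simp: phiT_two_rows_eq_iff)
      ultimately show False
        using maximal[OF \<open>?pt (i, c) \<notin> C\<close>] by simp
    next
      case other
      have "\<forall>c. c0 < c \<longrightarrow> c < c1 \<longrightarrow> ?pt (i + 1, c) \<notin> insert X C'"
        using other chute(5) by auto
      then have "u_compatible Vs Vt s t r m u (insert X C' \<union> {?pt (i, c0)} - {?pt (i + 1, c1)})"
        using u_compatible_chute_swap[OF rect compX] chute(1,2) by simp
      moreover have "insert X C' \<union> {?pt (i, c0)} - {?pt (i + 1, c1)} = insert X C"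
        unfolding C using X chute(3) by auto
      moreover have "X \<notin> C"
        using X other(1) unfolding C by blast
      ultimately show False
        using maximal by simp
    qed
  qed
  then show ?thesis
    using hchute_u_compatible_inverse[OF comp move] unfolding concurrent_vertex_map_iff by blast
qed

section \<open>The opposite quiver\<close>

definition opp_pos :: "pos \<Rightarrow> pos" where
  "opp_pos = (\<lambda>(i, j, k). (j, i, k))"

lemma opp_pos_simp: "opp_pos (i, j, k) = (j, i, k)"
  unfolding opp_pos_def by simp

lemma opp_pos_opp_pos [simp]: "opp_pos (opp_pos X) = X"
  by (cases X) (simp add: opp_pos_simp)

lemma inj_opp_pos: "inj opp_pos"
  by (metis injI opp_pos_opp_pos)

lemma image_opp_pos_opp_pos [simp]: "opp_pos ` opp_pos ` D = D"
  by (simp add: image_image)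

lemma opp_pos_mem_Lset_iff: "opp_pos X \<in> Lset t s r m \<longleftrightarrow> X \<in> Lset s t r m"
  by (cases X) (auto simp: Lset_def opp_pos_simp)

lemma LT_opp: "LT t s r m \<beta> = opp_pos ` LS s t r m \<beta>"
proof -
  have LT_iff: "X \<in> LT t s r m \<beta> \<longleftrightarrow> opp_pos X \<in> LS s t r m \<beta>" for X
    by (cases X) (auto simp: mem_LT_iff mem_LS_iff opp_pos_simp arrowsT_def arrowsS_def)
  show ?thesis
  proof (intro equalityI subsetI)
    fix X assume "X \<in> LT t s r m \<beta>"
    then have "opp_pos X \<in> LS s t r m \<beta>"
      using LT_iff by blast
    then show "X \<in> opp_pos ` LS s t r m \<beta>"
      by (rule image_eqI[rotated]) simp
  next
    fix X assume "X \<in> opp_pos ` LS s t r m \<beta>"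
    then show "X \<in> LT t s r m \<beta>"
      using LT_iff by auto
  qed
qed

lemma posT_opp: "posT t s r m \<beta> (opp_pos X) = prod.swap (posS s t r m \<beta> X)"
  by (cases X) (simp add: posT_simp posS_simp opp_pos_simp colOff_def rowOff_def arrowsT_def arrowsS_def)

lemma DT_opp: "DT t s r m \<beta> (opp_pos ` D) = prod.swap ` DS s t r m \<beta> D"
proof -
  have "opp_pos ` D \<inter> opp_pos ` LS s t r m \<beta> = opp_pos ` (D \<inter> LS s t r m \<beta>)"
    using image_Int[OF inj_opp_pos] by simp
  then show ?thesis
    unfolding DT_eq_image DS_eq_image LT_opp by (simp add: image_image posT_opp)
qed

lemma DS_opp: "DS t s r m \<alpha> (opp_pos ` D) = prod.swap ` DT s t r m \<alpha> D"
  using arg_cong[OF DT_opp[of s t r m \<alpha> "opp_pos ` D"], of "image prod.swap"]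
  by (simp add: image_image)

lemma phiT_opp:
  assumes "(p, q) \<in> gridS s t r m \<beta>"
  shows "phiT t s r m \<beta> (q, p) = opp_pos (phiS s t r m \<beta> (p, q))"
proof -
  have "opp_pos (phiS s t r m \<beta> (p, q)) \<in> LT t s r m \<beta>"
    unfolding LT_opp using phiS_in_LS[OF assms] by blast
  moreover have "posT t s r m \<beta> (opp_pos (phiS s t r m \<beta> (p, q))) = (q, p)"
    unfolding posT_opp using posS_phiS[OF assms] by simp
  ultimately show ?thesis
    using phiT_posT by metis
qed

lemma u_compatible_opp:
  "u_compatible Vt Vs t s r m u (opp_pos ` D) \<longleftrightarrow> u_compatible Vs Vt s t r m u D"
proof -
  have "opp_pos ` D \<subseteq> Lset t s r m \<longleftrightarrow> D \<subseteq> Lset s t r m"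
    using opp_pos_mem_Lset_iff by blast
  then show ?thesis
    unfolding u_compatible_def DT_opp DS_opp has_diag_chain_swap_iff by blast
qed

lemma concurrent_vertex_map_opp:
  "concurrent_vertex_map Vt Vs t s r m u (opp_pos ` C) \<longleftrightarrow> concurrent_vertex_map Vs Vt s t r m u C"
proof -
  have "insert X (opp_pos ` C) = opp_pos ` insert (opp_pos X) C" for X
    by simp
  moreover have "X \<in> opp_pos ` C \<longleftrightarrow> opp_pos X \<in> C" for X
    by force
  ultimately have "(\<forall>X. X \<notin> opp_pos ` C \<longrightarrow> \<not> u_compatible Vt Vs t s r m u (insert X (opp_pos ` C))) \<longleftrightarrow>
      (\<forall>X. opp_pos X \<notin> C \<longrightarrow> \<not> u_compatible Vs Vt s t r m u (insert (opp_pos X) C))"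
    by (simp only: u_compatible_opp)
  also have "\<dots> \<longleftrightarrow> (\<forall>Y. Y \<notin> C \<longrightarrow> \<not> u_compatible Vs Vt s t r m u (insert Y C))"
    by (metis opp_pos_opp_pos)
  finally show ?thesis
    unfolding concurrent_vertex_map_iff u_compatible_opp by blast
qed

lemma vchute_imp_hchute_opp:
  assumes "vchute Vs s t r m D D'"
  shows "hchute Vs t s r m (opp_pos ` D) (opp_pos ` D')"
proof -
  obtain \<beta> i j l where chute: "\<beta> \<in> Vs" "2 \<le> l" "1 \<le> i" "i + l - 1 \<le> rowsS s t r m \<beta>" "1 \<le> j"
    "j + 1 \<le> colsS s t r m \<beta>"
    "DS s t r m \<beta> D \<inter> ({i..i + l - 1} \<times> {j..j + 1}) = {(i + l - 1, j), (i, j + 1), (i + l - 1, j + 1)}"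
    "D' = D \<union> {phiS s t r m \<beta> (i, j)} - {phiS s t r m \<beta> (i + l - 1, j + 1)}"
    using assms unfolding vchute_def by blast
  have sizes: "rowsT t s r m \<beta> = colsS s t r m \<beta>" "colsT t s r m \<beta> = rowsS s t r m \<beta>"
    unfolding rowsT_def colsT_def rowsS_def colsS_def arrowsT_def arrowsS_def by simp_all
  have "DT t s r m \<beta> (opp_pos ` D) \<inter> ({j..j + 1} \<times> {i..i + l - 1})
      = prod.swap ` (DS s t r m \<beta> D \<inter> ({i..i + l - 1} \<times> {j..j + 1}))"
    unfolding DT_opp by auto
  also have "\<dots> = {(j + 1, i), (j, i + l - 1), (j + 1, i + l - 1)}"
    unfolding chute(7) by auto
  finally have pattern: "DT t s r m \<beta> (opp_pos ` D) \<inter> ({j..j + 1} \<times> {i..i + l - 1})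
      = {(j + 1, i), (j, i + l - 1), (j + 1, i + l - 1)}" .
  have "(i, j) \<in> gridS s t r m \<beta>" "(i + l - 1, j + 1) \<in> gridS s t r m \<beta>"
    using chute unfolding gridS_def by auto
  then have D': "opp_pos ` D' = opp_pos ` D \<union> {phiT t s r m \<beta> (j, i)} - {phiT t s r m \<beta> (j + 1, i + l - 1)}"
    unfolding chute(8) image_set_diff[OF inj_opp_pos] by (simp add: phiT_opp)
  show ?thesis
    unfolding hchute_def
    by (intro bexI[of _ \<beta>] exI[of _ j] exI[of _ i] exI[of _ l] conjI) (use chute(1-6) sizes pattern D' in simp_all)
qed

section \<open>The order on concurrent vertex maps\<close>

definition pos_key :: "pos \<Rightarrow> nat \<times> nat \<times> nat" where
  "pos_key = (\<lambda>(i, j, k). (k, i, j))"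

lemma ltT_iff_pos_key: "ltT X Y \<longleftrightarrow> pos_key X < pos_key Y"
  by (cases X, cases Y) (auto simp: ltT_def pos_key_def)

lemma bij_pos_key: "bij pos_key"
proof (rule bijI)
  show "inj pos_key"
    by (rule injI) (auto simp: pos_key_def split: prod.splits)
  show "surj pos_key"
    by (rule surjI[of _ "\<lambda>(k, i, j). (i, j, k)"]) (auto simp: pos_key_def)
qed

lemma sorted_ltT_iff: "sorted_wrt ltT xs \<longleftrightarrow> sorted_wrt (<) (map pos_key xs)"
proof -
  have "ltT = (\<lambda>X Y. pos_key X < pos_key Y)"
    by (intro ext) (rule ltT_iff_pos_key)
  then show ?thesis
    by (simp add: sorted_wrt_map)
qed

lemma ltT_trans: "ltT X Y \<Longrightarrow> ltT Y Z \<Longrightarrow> ltT X Z"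
  unfolding ltT_iff_pos_key by (rule less_trans)

lemma sorted_ltT_distinct: "sorted_wrt ltT xs \<Longrightarrow> distinct xs"
  unfolding sorted_ltT_iff using strict_sorted_iff distinct_map by blast

lemma enumT_eqI: "sorted_wrt ltT xs \<Longrightarrow> enumT (set xs) = xs"
  unfolding enumT_def
proof (rule the_equality)
  fix ys assume "set ys = set xs \<and> sorted_wrt ltT ys" "sorted_wrt ltT xs"
  then have "map pos_key ys = map pos_key xs"
    unfolding sorted_ltT_iff by (intro strict_sorted_equal) auto
  then show "ys = xs"
    using bij_pos_key by (simp add: bij_is_inj)
qed simp

lemma enumT_props:
  assumes "finite C"
  shows "set (enumT C) = C" "sorted_wrt ltT (enumT C)"
proof -
  define xs where "xs = map (inv pos_key) (sorted_list_of_set (pos_key ` C))"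
  have "map pos_key xs = sorted_list_of_set (pos_key ` C)"
    unfolding xs_def using bij_pos_key by (simp add: map_idI bij_is_surj surj_f_inv_f)
  then have "sorted_wrt ltT xs"
    unfolding sorted_ltT_iff by simp
  moreover have "set xs = C"
    unfolding xs_def using assms bij_pos_key by (simp add: image_image bij_is_inj)
  ultimately show "set (enumT C) = C" "sorted_wrt ltT (enumT C)"
    using enumT_eqI by metis+
qed

lemma enumT_exchange:
  assumes "finite C" "Q \<in> C" "P \<notin> C" "ltT P Q"
  obtains us ws ps where "enumT C = us @ Q # ws" "enumT (C \<union> {P} - {Q}) = ps @ ws"
    "length ps = Suc (length us)" "\<forall>x\<in>set ps. ltT x Q"
proof -
  have ys: "set (enumT C) = C" "sorted_wrt ltT (enumT C)"
    using enumT_props[OF assms(1)] by auto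
  then obtain us ws where split: "enumT C = us @ Q # ws"
    using assms(2) split_list by metis
  have us: "\<forall>x\<in>set us. ltT x Q" and ws: "sorted_wrt ltT ws" "\<forall>w\<in>set ws. ltT Q w"
    and us_ws: "\<forall>x\<in>set us. \<forall>w\<in>set ws. ltT x w"
    using ys(2) unfolding split by (auto simp: sorted_wrt_append)
  obtain ps where ps: "set ps = insert P (set us)" "sorted_wrt ltT ps"
    using enumT_props[of "insert P (set us)"] by blast
  have "distinct (enumT C)" "distinct ps"
    using sorted_ltT_distinct ys(2) ps(2) by blast+
  have "P \<notin> set us"
    using assms(3) ys(1) unfolding split by auto
  then have "length ps = Suc (length us)"
    using distinct_card[OF \<open>distinct ps\<close>] distinct_card[of us] \<open>distinct (enumT C)\<close> ps(1)
    unfolding split by simp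
  moreover have "ltT x w" if "x \<in> set ps" "w \<in> set ws" for x w
  proof -
    have "x = P \<or> x \<in> set us"
      using that(1) ps(1) by blast
    moreover have "ltT P w"
      using ltT_trans[OF assms(4) bspec[OF ws(2) that(2)]] .
    ultimately show ?thesis
      using us_ws that(2) by blast
  qed
  then have "sorted_wrt ltT (ps @ ws)"
    unfolding sorted_wrt_append using ps(2) ws(1) by blast
  moreover have "set (ps @ ws) = C \<union> {P} - {Q}"
    using ps(1) ys(1) \<open>distinct (enumT C)\<close> assms(2,3) unfolding split by auto
  ultimately show thesis
    using that[OF split] enumT_eqI ps(1) us assms(4) by (metis insert_iff)
qed

lemma setLtT_exchange:
  assumes "finite C" "Q \<in> C" "P \<notin> C" "ltT P Q"
  shows "setLtT (C \<union> {P} - {Q}) C"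
proof -
  obtain us ws ps where ys: "enumT C = us @ Q # ws" and xs: "enumT (C \<union> {P} - {Q}) = ps @ ws"
    and len: "length ps = Suc (length us)" and below: "\<forall>x\<in>set ps. ltT x Q"
    using enumT_exchange[OF assms] .
  have "ltT ((ps @ ws) ! length us) ((us @ Q # ws) ! length us)"
    using below len by (simp add: nth_append)
  moreover have "(ps @ ws) ! s' = (us @ Q # ws) ! s'" if "length us < s'" for s'
    using that len nth_append[of "us @ [Q]" ws s'] by (simp add: nth_append)
  ultimately show ?thesis
    unfolding setLtT_def Let_def xs ys using len by (intro conjI exI[of _ "length us"]) auto
qed

lemma hchute_exchange:
  assumes "hchute Vt s t r m C C'"
  obtains P Q where "C' = C \<union> {P} - {Q}" "P \<notin> C" "Q \<in> C" "ltT P Q" "ltT (opp_pos P) (opp_pos Q)"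
proof -
  obtain \<alpha> i c0 c1 where rect: "1 \<le> i" "i + 1 \<le> rowsT s t r m \<alpha>" "1 \<le> c0" "c0 < c1" "c1 \<le> colsT s t r m \<alpha>"
    and chute: "phiT s t r m \<alpha> (i + 1, c1) \<in> C" "phiT s t r m \<alpha> (i, c0) \<notin> C"
    and C': "C' = C \<union> {phiT s t r m \<alpha> (i, c0)} - {phiT s t r m \<alpha> (i + 1, c1)}"
    using assms by (elim hchuteE) blast
  obtain kP aP kQ bQ where "phiT s t r m \<alpha> (i, c0) = (i, aP, kP)" "phiT s t r m \<alpha> (i + 1, c1) = (i + 1, bQ, kQ)"
    "kP < kQ \<or> (kP = kQ \<and> aP < bQ)"
    by (rule rect_corners[OF rect])
  then show thesis
    using that[OF C' chute(2,1)] by (auto simp: ltT_def opp_pos_simp)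
qed

lemma chute_moveE:
  assumes "chute_move Vs Vt s t r m D D'"
  obtains "hchute Vt s t r m D D'" | "hchute Vs t s r m (opp_pos ` D) (opp_pos ` D')"
  using assms vchute_imp_hchute_opp unfolding chute_move_def by blast

lemma chute_move_exchange:
  assumes "chute_move Vs Vt s t r m C C'"
  obtains P Q where "C' = C \<union> {P} - {Q}" "P \<notin> C" "Q \<in> C" "ltT P Q"
  using assms
proof (cases rule: chute_moveE)
  case 1
  then show thesis
    using that by (elim hchute_exchange) blast
next
  case 2
  then obtain P Q where PQ: "opp_pos ` C' = opp_pos ` C \<union> {P} - {Q}" "P \<notin> opp_pos ` C" "Q \<in> opp_pos ` C"
    "ltT (opp_pos P) (opp_pos Q)"
    by (elim hchute_exchange) blast
  have "C' = opp_pos ` (opp_pos ` C \<union> {P} - {Q})"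
    using arg_cong[OF PQ(1), of "image opp_pos"] by simp
  then have "C' = C \<union> {opp_pos P} - {opp_pos Q}"
    by (simp add: image_set_diff[OF inj_opp_pos] image_Un)
  moreover have "opp_pos P \<notin> C" "opp_pos Q \<in> C"
    using PQ(2,3) inj_image_mem_iff[OF inj_opp_pos, of "opp_pos P" C]
      inj_image_mem_iff[OF inj_opp_pos, of "opp_pos Q" C] by simp_all
  ultimately show thesis
    using that PQ(4) by blast
qed

lemma chute_move_u_compatible:
  assumes "u_compatible Vs Vt s t r m u D" "chute_move Vs Vt s t r m D D'"
  shows "u_compatible Vs Vt s t r m u D'"
  using assms(2)
proof (cases rule: chute_moveE)
  case 1
  then show ?thesis
    using hchute_u_compatible[OF assms(1)] by blast
next
  case 2
  have "u_compatible Vt Vs t s r m u (opp_pos ` D')"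
    by (rule hchute_u_compatible[OF _ 2]) (simp add: u_compatible_opp assms(1))
  then show ?thesis
    by (simp add: u_compatible_opp)
qed

lemma chute_move_u_compatible_inverse:
  assumes "u_compatible Vs Vt s t r m u D" "chute_move Vs Vt s t r m D' D"
  shows "u_compatible Vs Vt s t r m u D'"
  using assms(2)
proof (cases rule: chute_moveE)
  case 1
  then show ?thesis
    using hchute_u_compatible_inverse[OF assms(1)] by blast
next
  case 2
  have "u_compatible Vt Vs t s r m u (opp_pos ` D')"
    by (rule hchute_u_compatible_inverse[OF _ 2]) (simp add: u_compatible_opp assms(1))
  then show ?thesis
    by (simp add: u_compatible_opp)
qed

lemma chute_move_concurrent_vertex_map:
  assumes "concurrent_vertex_map Vs Vt s t r m u C" "chute_move Vs Vt s t r m C C'"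
  shows "concurrent_vertex_map Vs Vt s t r m u C'"
  using assms(2)
proof (cases rule: chute_moveE)
  case 1
  then show ?thesis
    using hchute_concurrent_vertex_map[OF assms(1)] by blast
next
  case 2
  have "concurrent_vertex_map Vt Vs t s r m u (opp_pos ` C')"
    by (rule hchute_concurrent_vertex_map[OF _ 2]) (simp add: concurrent_vertex_map_opp assms(1))
  then show ?thesis
    by (simp add: concurrent_vertex_map_opp)
qed

lemma chute_move_concurrent_vertex_map_inverse:
  assumes "concurrent_vertex_map Vs Vt s t r m u C" "chute_move Vs Vt s t r m C' C"
  shows "concurrent_vertex_map Vs Vt s t r m u C'"
  using assms(2)
proof (cases rule: chute_moveE)
  case 1
  then show ?thesis
    using hchute_concurrent_vertex_map_inverse[OF assms(1)] by blast
next
  case 2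
  have "concurrent_vertex_map Vt Vs t s r m u (opp_pos ` C')"
    by (rule hchute_concurrent_vertex_map_inverse[OF _ 2]) (simp add: concurrent_vertex_map_opp assms(1))
  then show ?thesis
    by (simp add: concurrent_vertex_map_opp)
qed

lemma finite_Lset: "finite (Lset s t r m)"
proof (rule finite_subset)
  show "Lset s t r m \<subseteq> (\<Union>k\<in>{1..r}. {1..m (t k)} \<times> {1..m (s k)} \<times> {k})"
    unfolding Lset_def by auto
qed simp

lemma chute_move_setLtT:
  assumes "u_compatible Vs Vt s t r m u C" "chute_move Vs Vt s t r m C C'"
  shows "setLtT C' C"
proof -
  have "finite C"
    using assms(1) finite_Lset finite_subset unfolding u_compatible_def by blast
  obtain P Q where "C' = C \<union> {P} - {Q}" "P \<notin> C" "Q \<in> C" "ltT P Q"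
    using assms(2) by (rule chute_move_exchange)
  then show ?thesis
    using setLtT_exchange[OF \<open>finite C\<close>] by simp
qed

theorem lemma3p9:
  fixes Vs Vt :: "'v set" and s t :: "nat \<Rightarrow> 'v" and r :: nat and m u :: "'v \<Rightarrow> nat"
  assumes "standing Vs Vt s t r m u"
  shows "(\<forall>D D'. u_compatible Vs Vt s t r m u D \<and> chute_move Vs Vt s t r m D D'
                 \<longrightarrow> u_compatible Vs Vt s t r m u D')
       \<and> (\<forall>C C'. concurrent_vertex_map Vs Vt s t r m u C \<and> chute_move Vs Vt s t r m C C'
                 \<longrightarrow> concurrent_vertex_map Vs Vt s t r m u C' \<and> setLtT C' C)
       \<and> (\<forall>D D'. u_compatible Vs Vt s t r m u D \<and> inv_chute_move Vs Vt s t r m D D'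
                 \<longrightarrow> u_compatible Vs Vt s t r m u D')
       \<and> (\<forall>C C'. concurrent_vertex_map Vs Vt s t r m u C \<and> inv_chute_move Vs Vt s t r m C C'
                 \<longrightarrow> concurrent_vertex_map Vs Vt s t r m u C' \<and> setLtT C C')"
proof (intro conjI allI impI; elim conjE)
  fix D D' assume "u_compatible Vs Vt s t r m u D" "chute_move Vs Vt s t r m D D'"
  then show "u_compatible Vs Vt s t r m u D'"
    by (rule chute_move_u_compatible)
next
  fix C C' assume cvm: "concurrent_vertex_map Vs Vt s t r m u C" and move: "chute_move Vs Vt s t r m C C'"
  show "concurrent_vertex_map Vs Vt s t r m u C'"
    using cvm move by (rule chute_move_concurrent_vertex_map)
  have "u_compatible Vs Vt s t r m u C"
    using cvm unfolding concurrent_vertex_map_def by blast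
  then show "setLtT C' C"
    using move by (rule chute_move_setLtT)
next
  fix D D' assume "u_compatible Vs Vt s t r m u D" "inv_chute_move Vs Vt s t r m D D'"
  then show "u_compatible Vs Vt s t r m u D'"
    unfolding inv_chute_move_def by (rule chute_move_u_compatible_inverse)
next
  fix C C' assume cvm: "concurrent_vertex_map Vs Vt s t r m u C" and move: "inv_chute_move Vs Vt s t r m C C'"
  show cvm': "concurrent_vertex_map Vs Vt s t r m u C'"
    using cvm move unfolding inv_chute_move_def by (rule chute_move_concurrent_vertex_map_inverse)
  have "u_compatible Vs Vt s t r m u C'"
    using cvm' unfolding concurrent_vertex_map_def by blast
  then show "setLtT C C'"
    using move unfolding inv_chute_move_def by (rule chute_move_setLtT)
qed

end
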